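(* Let $\Omega\subseteq\mathbb{R}^n$ be bounded and measurable, $Y$ a Hilbert space, $S:L^2(\Omega)\to Y$ linear and continuous, $z\in Y$, $u_a,u_b\in L^\infty(\Omega)$, $u_a\le u_b$, $U_{\mathrm{ad}}=\{u\in L^2(\Omega):u_a\le u\le u_b\text{ a.e.}\}$, and let $(S_h)_h$, $\delta$ be as in the context. Let $u^\dagger$ be a solution of $\min_{u\in U_{\mathrm{ad}}}\frac12\|Su-z\|_Y^2$ satisfying the Active Set Condition (see context). Let $h_{\max}>0$ and $\varepsilon_k=0$ for all $k$, and for each $h$ let $(u_k^{\mathrm{in}})_k$ be generated by the inexact Bregman algorithm of the context. Then there exists a constant $C$ such that for every $0<h\le h_{\max}$ there exists a stopping index $k(h)$ with \[\sum_{i=1}^{k(h)}H_i\le C<\infty,\qquad H_i:=\delta(h)\Big(\frac{\rho_i}{\alpha_i}+\frac{\gamma_{i-1}}{\alpha_i}+\frac{\gamma_{i-1}\rho_i}{\alpha_i}\Big)+\delta(h)^2\Big(\frac{\rho_i^2}{\alpha_i^2}+\frac{\rho_i^2}{\alpha_i}\Big),\] and $k(h)\to\infty$ as $h\to0$. Furthermore $\min_{i=1,\dots,k(h)}\|u_i^{\mathrm{in}}-u^\dagger\|\to0$ as $h\to0$.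
   Context: $\|\cdot\|$: $L^2(\Omega)$ norm; $P_{U_{\mathrm{ad}}}$: $L^2$-projection onto $U_{\mathrm{ad}}$; $\chi_I$: characteristic function; $|\cdot|$: Lebesgue measure. Active Set Condition, with $p^\dagger:=S^\ast(z-Su^\dagger)$: there exist $I\subseteq\Omega$, $w\in Y$, constants $\kappa,c>0$ with (1) $I\supseteq\{p^\dagger=0\}$ and $\chi_Iu^\dagger=\chi_IP_{U_{\mathrm{ad}}}(S^\ast w)$; (2) with $A:=\Omega\setminus I$, $|\{x\in A:0<|p^\dagger(x)|<\varepsilon\}|\le c\varepsilon^\kappa$ for all $\varepsilon>0$; (3) $S^\ast w\in L^\infty(\Omega)$. For each $h>0$, $S_h:L^2(\Omega)\to Y$ is linear continuous with finite-dimensional range, and there is a continuous, monotonically increasing $\delta:\mathbb{R}^+\to\mathbb{R}^+$, $\delta(0)=0$, with $\|(S-S_h)u_h\|_Y+\|(S^\ast-S_h^\ast)(S_hu_h-z)\|\le\delta(h)$ for all $h\ge0$, $u_h\in U_{\mathrm{ad}}$. $(\alpha_k)_k$ bounded sequence of positive reals, $\gamma_k:=\sum_{j=1}^k\alpha_j^{-1}$ ($\gamma_0=0$), $\rho_k:=\sqrt{\alpha_k^{-1}(1+\alpha_k^{-1})}$. $\mathcal B(\alpha,\lambda,u):=(1+\frac1\alpha)\|u-P_{U_{\mathrm{ad}}}(\frac1\alpha S_h^\ast(z-S_hu)+\lambda)\|$. Inexact Bregman algorithm: $u_0^{\mathrm{in}}=P_{U_{\mathrm{ad}}}(0)$, $\lambda_0^{\mathrm{in}}=0$;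 for $k\ge1$ find $u_k^{\mathrm{in}}\in U_{\mathrm{ad}}$ with $\mathcal B(\alpha_k,\lambda_{k-1}^{\mathrm{in}},u_k^{\mathrm{in}})\le\varepsilon_k$, then set $\lambda_k^{\mathrm{in}}=\sum_{i=1}^k\frac1{\alpha_i}S_h^\ast(z-S_hu_i^{\mathrm{in}})$. *)

theory Defs
  imports "HOL-Analysis.Analysis"
begin

text \<open>Elements of L2(Omega) are represented by real-valued functions on the ambient
  Euclidean space; only their values on Omega matter (all integrals are w.r.t.
  Lebesgue measure restricted to Omega).\<close>

definition L2 :: "'a::euclidean_space set \<Rightarrow> ('a \<Rightarrow> real) set" where
  "L2 \<Omega> = {f. f \<in> borel_measurable (lebesgue_on \<Omega>) \<and>
                integrable (lebesgue_on \<Omega>) (\<lambda>x. (f x)\<^sup>2)}"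

definition L2inner :: "'a::euclidean_space set \<Rightarrow> ('a \<Rightarrow> real) \<Rightarrow> ('a \<Rightarrow> real) \<Rightarrow> real" where
  "L2inner \<Omega> f g = integral\<^sup>L (lebesgue_on \<Omega>) (\<lambda>x. f x * g x)"

definition L2norm :: "'a::euclidean_space set \<Rightarrow> ('a \<Rightarrow> real) \<Rightarrow> real" where
  "L2norm \<Omega> f = sqrt (L2inner \<Omega> f f)"

definition Linfty :: "'a::euclidean_space set \<Rightarrow> ('a \<Rightarrow> real) \<Rightarrow> bool" where
  "Linfty \<Omega> f \<longleftrightarrow> f \<in> borel_measurable (lebesgue_on \<Omega>) \<and>
      (\<exists>B. AE x in lebesgue_on \<Omega>. \<bar>f x\<bar> \<le> B)"

definition Uad :: "'a::euclidean_space set \<Rightarrow> ('a \<Rightarrow> real) \<Rightarrow> ('a \<Rightarrow> real) \<Rightarrow> ('a \<Rightarrow> real) set" where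
  "Uad \<Omega> ua ub = {u \<in> L2 \<Omega>. AE x in lebesgue_on \<Omega>. ua x \<le> u x \<and> u x \<le> ub x}"

definition L2proj :: "'a::euclidean_space set \<Rightarrow> ('a \<Rightarrow> real) set \<Rightarrow> ('a \<Rightarrow> real) \<Rightarrow> ('a \<Rightarrow> real)" where
  "L2proj \<Omega> K v = (SOME p. p \<in> K \<and>
      (\<forall>q\<in>K. L2norm \<Omega> (\<lambda>x. v x - p x) \<le> L2norm \<Omega> (\<lambda>x. v x - q x)))"

definition bounded_linear_L2 :: "'a::euclidean_space set \<Rightarrow> (('a \<Rightarrow> real) \<Rightarrow> 'y::real_normed_vector) \<Rightarrow> bool" where
  "bounded_linear_L2 \<Omega> T \<longleftrightarrow>
     (\<forall>f\<in>L2 \<Omega>. \<forall>g\<in>L2 \<Omega>. \<forall>a b. T (\<lambda>x. a * f x + b * g x) = a *\<^sub>R T f + b *\<^sub>R T g) \<and>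
     (\<exists>K. \<forall>f\<in>L2 \<Omega>. norm (T f) \<le> K * L2norm \<Omega> f)"

definition is_adjoint :: "'a::euclidean_space set \<Rightarrow> (('a \<Rightarrow> real) \<Rightarrow> 'y::real_inner) \<Rightarrow> ('y \<Rightarrow> 'a \<Rightarrow> real) \<Rightarrow> bool" where
  "is_adjoint \<Omega> T Tadj \<longleftrightarrow> (\<forall>y. Tadj y \<in> L2 \<Omega>) \<and>
      (\<forall>f\<in>L2 \<Omega>. \<forall>y. inner (T f) y = L2inner \<Omega> f (Tadj y))"

definition finite_dim_range :: "'a::euclidean_space set \<Rightarrow> (('a \<Rightarrow> real) \<Rightarrow> 'y::real_vector) \<Rightarrow> bool" where
  "finite_dim_range \<Omega> T \<longleftrightarrow> (\<exists>B. finite B \<and> T ` L2 \<Omega> \<subseteq> span B)"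

definition active_set_condition ::
  "'a::euclidean_space set \<Rightarrow> ('a \<Rightarrow> real) \<Rightarrow> ('a \<Rightarrow> real) \<Rightarrow> ('y::real_inner \<Rightarrow> 'a \<Rightarrow> real)
     \<Rightarrow> (('a \<Rightarrow> real) \<Rightarrow> 'y) \<Rightarrow> 'y \<Rightarrow> ('a \<Rightarrow> real) \<Rightarrow> bool" where
  "active_set_condition \<Omega> ua ub Sadj S z udag \<longleftrightarrow>
     (let p = Sadj (z - S udag) in
      \<exists>I w \<kappa> c. I \<in> sets lebesgue \<and> I \<subseteq> \<Omega> \<and> \<kappa> > 0 \<and> c > 0 \<and>
        {x \<in> \<Omega>. p x = 0} \<subseteq> I \<and>
        (AE x in lebesgue_on \<Omega>. x \<in> I \<longrightarrow> udag x = L2proj \<Omega> (Uad \<Omega> ua ub) (Sadj w) x) \<and>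
        (\<forall>\<epsilon>>0. measure lebesgue {x \<in> \<Omega> - I. 0 < \<bar>p x\<bar> \<and> \<bar>p x\<bar> < \<epsilon>} \<le> c * \<epsilon> powr \<kappa>) \<and>
        Linfty \<Omega> (Sadj w))"

definition gam :: "(nat \<Rightarrow> real) \<Rightarrow> nat \<Rightarrow> real" where
  "gam \<alpha> k = (\<Sum>j=1..k. 1 / \<alpha> j)"

definition rho :: "(nat \<Rightarrow> real) \<Rightarrow> nat \<Rightarrow> real" where
  "rho \<alpha> k = sqrt (1 / \<alpha> k * (1 + 1 / \<alpha> k))"

definition Hterm :: "(real \<Rightarrow> real) \<Rightarrow> real \<Rightarrow> (nat \<Rightarrow> real) \<Rightarrow> nat \<Rightarrow> real" where
  "Hterm \<delta> h \<alpha> i =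
     \<delta> h * (rho \<alpha> i / \<alpha> i + gam \<alpha> (i - 1) / \<alpha> i + gam \<alpha> (i - 1) * rho \<alpha> i / \<alpha> i)
     + (\<delta> h)\<^sup>2 * ((rho \<alpha> i)\<^sup>2 / (\<alpha> i)\<^sup>2 + (rho \<alpha> i)\<^sup>2 / \<alpha> i)"

definition bregman_B ::
  "'a::euclidean_space set \<Rightarrow> ('a \<Rightarrow> real) \<Rightarrow> ('a \<Rightarrow> real) \<Rightarrow> (('a \<Rightarrow> real) \<Rightarrow> 'y::real_inner)
     \<Rightarrow> ('y \<Rightarrow> 'a \<Rightarrow> real) \<Rightarrow> 'y \<Rightarrow> real \<Rightarrow> ('a \<Rightarrow> real) \<Rightarrow> ('a \<Rightarrow> real) \<Rightarrow> real" where
  "bregman_B \<Omega> ua ub Sh Shadj z \<alpha> lam u =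
     (1 + 1 / \<alpha>) * L2norm \<Omega> (\<lambda>x. u x -
        L2proj \<Omega> (Uad \<Omega> ua ub) (\<lambda>y. 1 / \<alpha> * Shadj (z - Sh u) y + lam y) x)"

definition bregman_lambda ::
  "(('a \<Rightarrow> real) \<Rightarrow> 'y::real_inner) \<Rightarrow> ('y \<Rightarrow> 'a \<Rightarrow> real) \<Rightarrow> 'y \<Rightarrow> (nat \<Rightarrow> real)
     \<Rightarrow> (nat \<Rightarrow> 'a \<Rightarrow> real) \<Rightarrow> nat \<Rightarrow> 'a \<Rightarrow> real" where
  "bregman_lambda Sh Shadj z \<alpha> u k = (\<lambda>x. \<Sum>i=1..k. 1 / \<alpha> i * Shadj (z - Sh (u i)) x)"

end

theory Submission
  imports Defs
begin

text \<open>
  With exact subproblem solves every iterate is the pointwise clamp u_k = P(\<lambda>_k) of the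
  accumulated multiplier \<lambda>_k = \<Sum>_{i \<le> k} S_h^*(z - S_h u_i) / \<alpha>_i. On the set I the source
  condition compares \<lambda>_k with S^*w; off I the sign of p\<dagger> controls the error where
  |p\<dagger>| \<ge> \<epsilon>, and the measure condition controls the remaining set. Summing this pointwise
  estimate with the weights 1/\<alpha>_k, the multiplier terms telescope and replacing S_h by S costs
  O(\<delta>(h)) per step, so that min_{i \<le> K} \<parallel>u_i - u\<dagger>\<parallel>^2 is at most a constant times
  \<delta>(h) \<gamma>_K + (\<epsilon>^-2 + 1) / \<gamma>_K + \<delta>(h) + \<epsilon>^\<kappa>. The stopping index k(h) is the largest K whose
  accumulated coefficients, multiplied by d = \<delta>(h) + \<delta>(h)^2, stay below \<surd>d: this keeps
  \<Sum> H_i bounded and forces \<delta>(h) \<gamma>_{k(h)} \<rightarrow> 0, while \<gamma>_K \<ge> K / sup \<alpha> makes the 1/\<gamma>_K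
  term vanish.
\<close>

section \<open>Weighted sums along the step sizes\<close>

lemma gam_0 [simp]: "gam a 0 = 0"
  by (simp add: gam_def)

lemma gam_Suc: "gam a (Suc K) = gam a K + 1 / a (Suc K)"
  by (simp add: gam_def sum.cl_ivl_Suc)

lemma gam_mono:
  assumes "\<And>k. k \<ge> 1 \<Longrightarrow> a k > 0" and "k \<le> K"
  shows "gam a k \<le> gam a K"
  unfolding gam_def using assms by (intro sum_mono2) (auto simp: less_imp_le)

lemma gam_nonneg:
  assumes "\<And>k. k \<ge> 1 \<Longrightarrow> a k > 0"
  shows "0 \<le> gam a K"
  using gam_mono[OF assms, where k=0] by simp

lemma gam_ge_div_bound:
  assumes "\<And>k. k \<ge> 1 \<Longrightarrow> a k > 0" and "\<And>k. k \<ge> 1 \<Longrightarrow> a k \<le> M"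
  shows "real K / M \<le> gam a K"
proof -
  have "real K / M = (\<Sum>k=1..K. 1 / M)" by simp
  also have "\<dots> \<le> gam a K"
    unfolding gam_def using assms by (intro sum_mono frac_le) auto
  finally show ?thesis .
qed

lemma weighted_gam_sum_le:
  assumes "\<And>k. k \<ge> 1 \<Longrightarrow> a k > 0" and "E \<ge> 0"
  shows "(\<Sum>k=1..K. 1 / a k * (gam a k * E)) \<le> (gam a K)\<^sup>2 * E"
proof -
  have "(\<Sum>k=1..K. 1 / a k * (gam a k * E)) \<le> (\<Sum>k=1..K. 1 / a k * (gam a K * E))"
    using assms gam_mono[OF assms(1)] by (intro sum_mono mult_left_mono mult_right_mono) (auto simp: less_imp_le)
  also have "\<dots> = (gam a K)\<^sup>2 * E"
    by (simp add: gam_def power2_eq_square sum_distrib_right mult.assoc)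
  finally show ?thesis .
qed

lemma hinge_sq_telescope:
  fixes X g b :: real
  assumes "g \<le> b"
  shows "(b - g) * max 0 (X - b) \<le> ((max 0 (X - g))\<^sup>2 - (max 0 (X - b))\<^sup>2) / 2"
proof (cases "b \<le> X")
  case True
  have "((X - g)\<^sup>2 - (X - b)\<^sup>2) / 2 - (b - g) * (X - b) = (b - g)\<^sup>2 / 2"
    by (simp add: power2_eq_square field_simps)
  then have "(b - g) * (X - b) \<le> ((X - g)\<^sup>2 - (X - b)\<^sup>2) / 2"
    using zero_le_power2[of "b - g"] by linarith
  then show ?thesis using True assms by (simp add: max_def)
qed (simp add: max_def)

text \<open>A discrete version of \<open>\<integral>\<^sub>0\<^sup>X (X - t) dt = X\<^sup>2 / 2\<close> along the
  grid \<open>gam a 1, gam a 2, \<dots>\<close>.\<close>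

lemma weighted_hinge_sum_le:
  assumes apos: "\<And>k. k \<ge> 1 \<Longrightarrow> a k > 0" and X: "X \<ge> 0"
  shows "(\<Sum>k=1..K. 1 / a k * max 0 (X - gam a k)) \<le> X\<^sup>2 / 2"
proof -
  have "(\<Sum>k=1..K. 1 / a k * max 0 (X - gam a k)) \<le> X\<^sup>2 / 2 - (max 0 (X - gam a K))\<^sup>2 / 2"
  proof (induction K)
    case 0
    then show ?case using X by (simp add: max_def)
  next
    case (Suc K)
    have "gam a K \<le> gam a (Suc K)" using gam_mono[OF apos] by simp
    from hinge_sq_telescope[OF this, of X]
    have step: "1 / a (Suc K) * max 0 (X - gam a (Suc K))
        \<le> ((max 0 (X - gam a K))\<^sup>2 - (max 0 (X - gam a (Suc K)))\<^sup>2) / 2"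
      by (simp add: gam_Suc)
    have "(\<Sum>k=1..Suc K. 1 / a k * max 0 (X - gam a k))
        = (\<Sum>k=1..K. 1 / a k * max 0 (X - gam a k)) + 1 / a (Suc K) * max 0 (X - gam a (Suc K))"
      by simp
    also have "\<dots> \<le> (X\<^sup>2 / 2 - (max 0 (X - gam a K))\<^sup>2 / 2)
        + ((max 0 (X - gam a K))\<^sup>2 - (max 0 (X - gam a (Suc K)))\<^sup>2) / 2"
      by (rule add_mono[OF Suc.IH step])
    also have "\<dots> = X\<^sup>2 / 2 - (max 0 (X - gam a (Suc K)))\<^sup>2 / 2"
      by (simp add: field_simps)
    finally show ?case .
  qed
  then show ?thesis using zero_le_power2[of "max 0 (X - gam a K)"] by linarith
qed

lemma weighted_hinge_mult_le:
  assumes apos: "\<And>k. k \<ge> 1 \<Longrightarrow> a k > 0" and "X \<ge> 0" "Q \<ge> 0"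
    and q: "\<And>k. k \<in> {1..K} \<Longrightarrow> 0 \<le> q k \<and> q k \<le> Q"
  shows "(\<Sum>k=1..K. 1 / a k * ((X - gam a k) * q k)) \<le> Q * X\<^sup>2 / 2"
proof -
  have "(\<Sum>k=1..K. 1 / a k * ((X - gam a k) * q k)) \<le> (\<Sum>k=1..K. Q * (1 / a k * max 0 (X - gam a k)))"
  proof (intro sum_mono)
    fix k assume k: "k \<in> {1..K}"
    have "(X - gam a k) * q k \<le> max 0 (X - gam a k) * Q"
      using q[OF k] by (intro order_trans[OF mult_right_mono mult_left_mono]) auto
    then have "1 / a k * ((X - gam a k) * q k) \<le> 1 / a k * (max 0 (X - gam a k) * Q)"
      using apos[of k] k by (intro mult_left_mono) auto
    then show "1 / a k * ((X - gam a k) * q k) \<le> Q * (1 / a k * max 0 (X - gam a k))"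
      by (simp only: mult_ac)
  qed
  also have "\<dots> \<le> Q * (X\<^sup>2 / 2)"
    unfolding sum_distrib_left[symmetric] using assms weighted_hinge_sum_le
    by (intro mult_left_mono) auto
  finally show ?thesis by simp
qed

text \<open>A discrete version of \<open>\<integral> \<langle>C', C\<rangle> = \<parallel>C\<parallel>\<^sup>2 / 2\<close> for the partial sums \<open>C\<close>.\<close>

lemma sum_inner_partial_sums_ge:
  fixes c :: "nat \<Rightarrow> 'a::real_inner"
  shows "(norm (\<Sum>i=1..K. c i))\<^sup>2 / 2 \<le> (\<Sum>k=1..K. inner (c k) (\<Sum>i=1..k. c i))"
proof (induction K)
  case 0
  then show ?case by simp
next
  case (Suc K)
  define Y where "Y = (\<Sum>i=1..K. c i)"
  have "(norm (Y + c (Suc K)))\<^sup>2 / 2 = (norm Y)\<^sup>2 / 2 + inner (c (Suc K)) (Y + c (Suc K)) - (norm (c (Suc K)))\<^sup>2 / 2"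
    by (simp add: power2_norm_eq_inner inner_add_left inner_add_right inner_commute)
  also have "\<dots> \<le> (\<Sum>k=1..K. inner (c k) (\<Sum>i=1..k. c i)) + inner (c (Suc K)) (Y + c (Suc K))"
    using Suc.IH zero_le_power2[of "norm (c (Suc K))"] unfolding Y_def by linarith
  finally show ?case by (simp add: Y_def sum.cl_ivl_Suc)
qed

lemma exists_below_weighted_mean:
  assumes apos: "\<And>k. k \<ge> 1 \<Longrightarrow> a k > 0" and K: "K \<ge> 1"
  shows "\<exists>i\<in>{1..K}. gam a K * E i \<le> (\<Sum>k=1..K. 1 / a k * E k)"
proof -
  obtain i where i: "i \<in> {1..K}" "E i = Min (E ` {1..K})"
    using Min_in[of "E ` {1..K}"] K by fastforce
  have "gam a K * E i = (\<Sum>k=1..K. 1 / a k * E i)"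
    unfolding gam_def by (simp add: sum_distrib_right)
  also have "\<dots> \<le> (\<Sum>k=1..K. 1 / a k * E k)"
    using i apos by (intro sum_mono mult_left_mono) (auto simp: less_imp_le)
  finally show ?thesis using i(1) by blast
qed

lemma norm_diff_perturbation:
  fixes Tv Sv Tu Su :: "'a::real_normed_vector"
  assumes "norm (Tv - Sv) \<le> \<delta>" "norm (Tu - Su) \<le> \<delta>"
  shows "norm ((Tv - Tu) - (Sv - Su)) \<le> 2 * \<delta>"
  using norm_triangle_ineq4[of "Tv - Sv" "Tu - Su"] assms by (simp add: algebra_simps)

lemma inner_residual_perturbation:
  fixes Tv Sv Tu Su z :: "'a::real_inner"
  assumes Tv: "norm (Tv - Sv) \<le> \<delta>" and Tu: "norm (Tu - Su) \<le> \<delta>" and M: "norm (Sv - Su) \<le> M"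
  shows "inner (Tv - Tu) (z - Tu) \<le> inner (Sv - Su) (z - Su) + \<delta> * (2 * norm (z - Su) + 2 * \<delta> + M)"
proof -
  have "inner (Tv - Tu) (z - Tu) - inner (Sv - Su) (z - Su)
      = inner ((Tv - Tu) - (Sv - Su)) (z - Tu) + inner (Sv - Su) (Su - Tu)"
    by (simp add: inner_diff_left inner_diff_right algebra_simps)
  also have "\<dots> \<le> norm ((Tv - Tu) - (Sv - Su)) * norm (z - Tu) + norm (Sv - Su) * norm (Su - Tu)"
    by (intro add_mono order_trans[OF abs_ge_self Cauchy_Schwarz_ineq2])
  also have "\<dots> \<le> (2 * \<delta>) * (norm (z - Su) + \<delta>) + M * \<delta>"
  proof (intro add_mono mult_mono)
    show "norm (z - Tu) \<le> norm (z - Su) + \<delta>"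
      using norm_triangle_ineq4[of "z - Su" "Tu - Su"] Tu by simp
    show "norm (Su - Tu) \<le> \<delta>" using Tu by (simp add: norm_minus_commute)
  qed (use norm_diff_perturbation[OF Tv Tu] M order_trans[OF norm_ge_zero Tu]
        order_trans[OF norm_ge_zero M] in auto)
  finally show ?thesis by (simp add: algebra_simps)
qed

text \<open>The summation argument in abstract form: \<open>Tu k\<close> and \<open>Tud\<close> stand for \<open>S\<^sub>h u\<^sub>k\<close> and
  \<open>S\<^sub>h u\<^sup>\<dagger>\<close>, \<open>Su k\<close> and \<open>Sud\<close> for \<open>S u\<^sub>k\<close> and \<open>S u\<^sup>\<dagger>\<close>, and \<open>E k\<close> for \<open>\<parallel>u\<^sub>k - u\<^sup>\<dagger>\<parallel>\<^sup>2\<close>.\<close>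

lemma weighted_error_step:
  fixes Tu Su :: "nat \<Rightarrow> 'a::real_inner" and Tud Sud z w :: 'a and a E :: "nat \<Rightarrow> real"
    and \<delta> M C X :: real and k :: nat
  defines "c \<equiv> \<lambda>k. (1 / a k) *\<^sub>R (Tu k - Tud)"
    and "D \<equiv> \<delta> * (2 * norm (z - Sud) + 2 * \<delta> + M)"
    and "q \<equiv> - inner (Su k - Sud) (z - Sud)"
  assumes apos: "\<And>k. k \<ge> 1 \<Longrightarrow> a k > 0" and k: "k \<ge> 1"
    and Tu: "norm (Tu k - Su k) \<le> \<delta>" and Tud: "norm (Tud - Sud) \<le> \<delta>" and Su: "norm (Su k - Sud) \<le> M"
    and E: "E k \<le> (\<Sum>i=1..k. 1 / a i * inner (Tu k - Tud) (z - Tu i))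
              - inner (Su k - Sud) w + C - X * inner (Su k - Sud) (z - Sud)"
  shows "1 / a k * E k \<le> 1 / a k * (gam a k * D) + 1 / a k * ((X - gam a k) * q)
       - inner (c k) (\<Sum>i=1..k. c i) - inner (c k) w + 1 / a k * (2 * \<delta> * norm w + C)"
proof -
  define y where "y = Tu k - Tud"
  have "(\<Sum>i=1..k. 1 / a i * inner y (z - Tu i)) = (\<Sum>i=1..k. 1 / a i * inner y (z - Tud) - inner y (c i))"
    by (intro sum.cong refl) (simp add: y_def c_def inner_diff_right algebra_simps)
  also have "\<dots> = gam a k * inner y (z - Tud) - inner y (\<Sum>i=1..k. c i)"
    by (simp add: sum_subtractf gam_def sum_distrib_right inner_sum_right)
  finally have sum_eq: "(\<Sum>i=1..k. 1 / a i * inner y (z - Tu i))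
      = gam a k * inner y (z - Tud) - inner y (\<Sum>i=1..k. c i)" .
  have "inner y (z - Tud) \<le> - q + D"
    using inner_residual_perturbation[OF Tu Tud Su, of z] by (simp add: y_def q_def D_def)
  then have res: "gam a k * inner y (z - Tud) \<le> gam a k * (- q + D)"
    using gam_nonneg[of a, OF apos] by (rule mult_left_mono)
  have "inner (y - (Su k - Sud)) w \<le> norm (y - (Su k - Sud)) * norm w"
    by (rule order_trans[OF abs_ge_self Cauchy_Schwarz_ineq2])
  also have "\<dots> \<le> 2 * \<delta> * norm w"
    using norm_diff_perturbation[OF Tu Tud] by (simp add: y_def mult_right_mono)
  finally have "- inner (Su k - Sud) w \<le> - inner y w + 2 * \<delta> * norm w"
    by (simp add: inner_diff_left)
  then have "E k \<le> gam a k * D + (X - gam a k) * q - inner y (\<Sum>i=1..k. c i) - inner y w + (2 * \<delta> * norm w + C)"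
    using E sum_eq res unfolding y_def by (simp add: q_def algebra_simps)
  then have "1 / a k * E k \<le> 1 / a k * (gam a k * D + (X - gam a k) * q - inner y (\<Sum>i=1..k. c i)
      - inner y w + (2 * \<delta> * norm w + C))"
    using apos[OF k] by (intro mult_left_mono) auto
  then show ?thesis by (simp add: c_def y_def algebra_simps)
qed

lemma weighted_error_sum_bound:
  fixes Tu Su :: "nat \<Rightarrow> 'a::real_inner" and Tud Sud z w :: 'a and a E :: "nat \<Rightarrow> real"
  assumes apos: "\<And>k. k \<ge> 1 \<Longrightarrow> a k > 0"
    and Tu: "\<And>k. k \<in> {1..K} \<Longrightarrow> norm (Tu k - Su k) \<le> \<delta>" and Tud: "norm (Tud - Sud) \<le> \<delta>"
    and Su: "\<And>k. k \<in> {1..K} \<Longrightarrow> norm (Su k - Sud) \<le> M" and M: "M \<ge> 0"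
    and q: "\<And>k. k \<in> {1..K} \<Longrightarrow> 0 \<le> - inner (Su k - Sud) (z - Sud) \<and> - inner (Su k - Sud) (z - Sud) \<le> Q"
    and Q: "Q \<ge> 0" and X: "X \<ge> 0"
    and E: "\<And>k. k \<in> {1..K} \<Longrightarrow> E k \<le> (\<Sum>i=1..k. 1 / a i * inner (Tu k - Tud) (z - Tu i))
              - inner (Su k - Sud) w + C - X * inner (Su k - Sud) (z - Sud)"
  shows "(\<Sum>k=1..K. 1 / a k * E k) \<le> (gam a K)\<^sup>2 * (\<delta> * (2 * norm (z - Sud) + 2 * \<delta> + M))
           + Q * X\<^sup>2 / 2 + (norm w)\<^sup>2 / 2 + gam a K * (2 * \<delta> * norm w + C)"
proof -
  define q where "q k = - inner (Su k - Sud) (z - Sud)" for k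
  define c where "c k = (1 / a k) *\<^sub>R (Tu k - Tud)" for k
  define Y where "Y k = (\<Sum>i=1..k. c i)" for k
  define D where "D = \<delta> * (2 * norm (z - Sud) + 2 * \<delta> + M)"
  have \<delta>: "\<delta> \<ge> 0" using Tud norm_ge_zero[of "Tud - Sud"] by linarith
  have "(\<Sum>k=1..K. 1 / a k * E k) \<le> (\<Sum>k=1..K. 1 / a k * (gam a k * D) + 1 / a k * ((X - gam a k) * q k)
       - inner (c k) (Y k) - inner (c k) w + 1 / a k * (2 * \<delta> * norm w + C))"
    unfolding q_def c_def[abs_def] Y_def D_def
    by (intro sum_mono weighted_error_step[of a, OF apos _ Tu Tud Su E]) auto
  also have "\<dots> = (\<Sum>k=1..K. 1 / a k * (gam a k * D)) + (\<Sum>k=1..K. 1 / a k * ((X - gam a k) * q k))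
       - (\<Sum>k=1..K. inner (c k) (Y k)) - inner (Y K) w + gam a K * (2 * \<delta> * norm w + C)"
    by (simp add: sum.distrib sum_subtractf Y_def inner_sum_left gam_def sum_distrib_right)
  also have "\<dots> \<le> (gam a K)\<^sup>2 * D + Q * X\<^sup>2 / 2 + (norm w)\<^sup>2 / 2 + gam a K * (2 * \<delta> * norm w + C)"
  proof -
    have "(\<Sum>k=1..K. 1 / a k * (gam a k * D)) \<le> (gam a K)\<^sup>2 * D"
      using \<delta> M unfolding D_def by (intro weighted_gam_sum_le[OF apos] mult_nonneg_nonneg) auto
    moreover have "(\<Sum>k=1..K. 1 / a k * ((X - gam a k) * q k)) \<le> Q * X\<^sup>2 / 2"
      using weighted_hinge_mult_le[of a X Q K q, OF apos X Q] q by (simp add: q_def)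
    moreover have "(norm (Y K))\<^sup>2 / 2 \<le> (\<Sum>k=1..K. inner (c k) (Y k))"
      unfolding Y_def by (rule sum_inner_partial_sums_ge)
    moreover have "(norm (Y K + w))\<^sup>2 = (norm (Y K))\<^sup>2 + 2 * inner (Y K) w + (norm w)\<^sup>2"
      by (simp add: power2_norm_eq_inner inner_add_left inner_add_right inner_commute)
    ultimately show ?thesis using zero_le_power2[of "norm (Y K + w)"] by linarith
  qed
  finally show ?thesis by (simp add: D_def)
qed

section \<open>The stopping rule\<close>

lemma rho_nonneg: "\<alpha> i > 0 \<Longrightarrow> rho \<alpha> i \<ge> 0"
  unfolding rho_def by simp

text \<open>\<open>Hterm (\<lambda>_. 1) 0 \<alpha> i\<close> adds up the coefficients of \<open>\<delta>(h)\<close> and \<open>\<delta>(h)\<^sup>2\<close> in \<open>H\<^sub>i\<close>.\<close>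

definition stop_weight :: "(nat \<Rightarrow> real) \<Rightarrow> nat \<Rightarrow> real" where
  "stop_weight \<alpha> K = (\<Sum>i=1..K. Hterm (\<lambda>_. 1) 0 \<alpha> i) + gam \<alpha> K"

lemma Hterm_le_unit_Hterm:
  assumes apos: "\<And>k. k \<ge> 1 \<Longrightarrow> \<alpha> k > 0" and i: "i \<ge> 1" and \<delta>: "\<delta> h \<ge> 0"
  shows "0 \<le> Hterm (\<lambda>_. 1) 0 \<alpha> i"
    and "Hterm \<delta> h \<alpha> i \<le> Hterm (\<lambda>_. 1) 0 \<alpha> i * (\<delta> h + (\<delta> h)\<^sup>2)"
proof -
  define A where "A = rho \<alpha> i / \<alpha> i + gam \<alpha> (i - 1) / \<alpha> i + gam \<alpha> (i - 1) * rho \<alpha> i / \<alpha> i"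
  define B where "B = (rho \<alpha> i)\<^sup>2 / (\<alpha> i)\<^sup>2 + (rho \<alpha> i)\<^sup>2 / \<alpha> i"
  have H: "Hterm d h' \<alpha> i = d h' * A + (d h')\<^sup>2 * B" for d h'
    by (simp add: Hterm_def A_def B_def)
  have A: "A \<ge> 0" unfolding A_def using apos[OF i] rho_nonneg[of \<alpha> i] gam_nonneg[OF apos] by simp
  have B: "B \<ge> 0" unfolding B_def using apos[OF i] by simp
  show "0 \<le> Hterm (\<lambda>_. 1) 0 \<alpha> i" using A B by (simp add: H)
  have "\<delta> h * A \<le> (\<delta> h + (\<delta> h)\<^sup>2) * A" "(\<delta> h)\<^sup>2 * B \<le> (\<delta> h + (\<delta> h)\<^sup>2) * B"
    using A B \<delta> by (intro mult_right_mono; simp)+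
  then show "Hterm \<delta> h \<alpha> i \<le> Hterm (\<lambda>_. 1) 0 \<alpha> i * (\<delta> h + (\<delta> h)\<^sup>2)"
    by (simp add: H algebra_simps)
qed

lemma stop_weight_ge_gam:
  assumes "\<And>k. k \<ge> 1 \<Longrightarrow> \<alpha> k > 0"
  shows "gam \<alpha> K \<le> stop_weight \<alpha> K"
  unfolding stop_weight_def using Hterm_le_unit_Hterm(1)[of \<alpha> _ "\<lambda>_. 0" 0, OF assms]
  by (auto intro!: sum_nonneg)

lemma sum_Hterm_le_stop_weight:
  assumes apos: "\<And>k. k \<ge> 1 \<Longrightarrow> \<alpha> k > 0" and \<delta>: "\<delta> h \<ge> 0"
  shows "(\<Sum>i=1..K. Hterm \<delta> h \<alpha> i) \<le> stop_weight \<alpha> K * (\<delta> h + (\<delta> h)\<^sup>2)"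
proof -
  have "(\<Sum>i=1..K. Hterm \<delta> h \<alpha> i) \<le> (\<Sum>i=1..K. Hterm (\<lambda>_. 1) 0 \<alpha> i) * (\<delta> h + (\<delta> h)\<^sup>2)"
    unfolding sum_distrib_right using Hterm_le_unit_Hterm(2)[of \<alpha> _ \<delta> h, OF apos _ \<delta>] by (intro sum_mono) auto
  also have "\<dots> \<le> stop_weight \<alpha> K * (\<delta> h + (\<delta> h)\<^sup>2)"
    unfolding stop_weight_def using gam_nonneg[OF apos] \<delta> by (intro mult_right_mono) auto
  finally show ?thesis .
qed

lemma stop_weight_index_bounds:
  assumes apos: "\<And>k. k \<ge> 1 \<Longrightarrow> \<alpha> k > 0" and \<delta>: "\<delta> h \<ge> 0"
    and K: "K = 0 \<or> stop_weight \<alpha> K * (\<delta> h + (\<delta> h)\<^sup>2) \<le> sqrt (\<delta> h + (\<delta> h)\<^sup>2)"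
  shows "(\<Sum>i=1..K. Hterm \<delta> h \<alpha> i) \<le> sqrt (\<delta> h + (\<delta> h)\<^sup>2)
    \<and> \<delta> h * gam \<alpha> K \<le> sqrt (\<delta> h + (\<delta> h)\<^sup>2)"
proof (cases "K = 0")
  case True
  then show ?thesis using \<delta> by simp
next
  case False
  then have weight: "stop_weight \<alpha> K * (\<delta> h + (\<delta> h)\<^sup>2) \<le> sqrt (\<delta> h + (\<delta> h)\<^sup>2)" using K by simp
  have "\<delta> h * gam \<alpha> K \<le> (\<delta> h + (\<delta> h)\<^sup>2) * stop_weight \<alpha> K"
    using \<delta> gam_nonneg[of \<alpha> K, OF apos] stop_weight_ge_gam[of \<alpha> K, OF apos] by (intro mult_mono) auto
  moreover have "(\<Sum>i=1..K. Hterm \<delta> h \<alpha> i) \<le> stop_weight \<alpha> K * (\<delta> h + (\<delta> h)\<^sup>2)"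
    by (rule sum_Hterm_le_stop_weight[of \<alpha> \<delta> h, OF apos \<delta>])
  ultimately show ?thesis using weight by (simp only: mult.commute[of "\<delta> h + (\<delta> h)\<^sup>2"]) linarith
qed

text \<open>The stopping index is the largest \<open>K \<le> 1/h\<close> with \<open>G K \<cdot> d h \<le> \<surd>(d h)\<close>; every fixed
  \<open>K\<close> qualifies as soon as \<open>d h\<close> is small enough.\<close>

lemma exists_stopping_index:
  fixes d :: "real \<Rightarrow> real" and G :: "nat \<Rightarrow> real"
  assumes d0: "\<And>h. h > 0 \<Longrightarrow> d h \<ge> 0" and dlim: "(d \<longlongrightarrow> 0) (at_right 0)"
  obtains kh :: "real \<Rightarrow> nat"
  where "filterlim kh at_top (at_right 0)" "\<And>h. h > 0 \<Longrightarrow> kh h = 0 \<or> G (kh h) * d h \<le> sqrt (d h)"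
proof
  define N where "N h = nat \<lfloor>1 / h\<rfloor>" for h :: real
  define A where "A h = {K. K \<le> N h \<and> G K * d h \<le> sqrt (d h)}" for h
  define kh where "kh h = Max (insert 0 (A h))" for h
  have fin: "finite (A h)" for h
    by (rule finite_subset[of _ "{..N h}"]) (auto simp: A_def)
  have "kh h \<in> insert 0 (A h)" for h
    unfolding kh_def using fin by (intro Max_in) auto
  then show "kh h = 0 \<or> G (kh h) * d h \<le> sqrt (d h)" for h
    by (auto simp: A_def)
  show "filterlim kh at_top (at_right 0)"
    unfolding filterlim_at_top
  proof
    fix n :: nat
    have "eventually (\<lambda>h. n \<le> N h) (at_right (0::real))"
      unfolding eventually_at_right_field
    proof (intro exI[of _ "1 / (real n + 1)"] conjI allI impI)
      fix h :: real assume "0 < h" "h < 1 / (real n + 1)"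
      then have "real n + 1 < 1 / h" by (simp add: field_simps)
      then show "n \<le> N h" unfolding N_def by linarith
    qed simp
    moreover have "((\<lambda>h. G n * sqrt (d h)) \<longlongrightarrow> G n * sqrt 0) (at_right 0)"
      by (intro tendsto_intros dlim)
    then have "eventually (\<lambda>h. G n * sqrt (d h) < 1) (at_right (0::real))"
      by (rule order_tendstoD) simp
    moreover have "eventually (\<lambda>h::real. h > 0) (at_right 0)"
      by (simp add: eventually_at_right_less)
    ultimately show "eventually (\<lambda>h. n \<le> kh h) (at_right 0)"
    proof eventually_elim
      case (elim h)
      have dh: "d h \<ge> 0" using d0 elim by auto
      have "G n * d h = (G n * sqrt (d h)) * sqrt (d h)"
        using dh by (simp add: mult.assoc)
      also have "\<dots> \<le> sqrt (d h)"
        using elim(2) dh mult_right_mono[of "G n * sqrt (d h)" 1 "sqrt (d h)"] by simp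
      finally have "n \<in> A h" using elim(1) by (simp add: A_def)
      then show ?case unfolding kh_def using fin by (intro Max_ge) auto
    qed
  qed
qed

lemma exists_powr_le:
  fixes c \<kappa> t :: real
  assumes "c \<ge> 0" "\<kappa> > 0" "t > 0"
  shows "\<exists>\<epsilon>>0. c * \<epsilon> powr \<kappa> \<le> t"
proof (intro exI conjI)
  define s where "s = t / (c + 1)"
  have s: "s > 0" using assms by (simp add: s_def)
  show "(s powr (1 / \<kappa>)) > 0" using s by simp
  have "c * (s powr (1 / \<kappa>)) powr \<kappa> = c / (c + 1) * t"
    using s assms by (simp add: powr_powr s_def)
  also have "\<dots> \<le> 1 * t" using assms by (intro mult_right_mono) auto
  finally show "c * (s powr (1 / \<kappa>)) powr \<kappa> \<le> t" by simp
qed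

text \<open>The error bound is balanced as follows: \<open>\<epsilon>\<close> makes the last term small, the stopping
  index \<open>K\<close> then makes the \<open>1/\<gamma>\<^sub>K\<close> term small, and \<open>\<delta>(h) \<gamma>\<^sub>K \<rightarrow> 0\<close> takes care of the rest.\<close>

lemma Min_error_tendsto_zero:
  fixes \<delta> :: "real \<Rightarrow> real" and err :: "real \<Rightarrow> nat \<Rightarrow> real" and kh :: "real \<Rightarrow> nat"
  assumes apos: "\<And>k. k \<ge> 1 \<Longrightarrow> \<alpha> k > 0" and abdd: "\<And>k. k \<ge> 1 \<Longrightarrow> \<alpha> k \<le> M"
    and \<delta>lim: "(\<delta> \<longlongrightarrow> 0) (at_right 0)" and hmax: "hmax > 0"
    and err_nonneg: "\<And>h i. err h i \<ge> 0"
    and coeffs: "c1 \<ge> 0" "c2 \<ge> 0" "c3 \<ge> 0" "P \<ge> 0" "Q \<ge> 0" "\<kappa> > 0"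
    and bound: "\<And>\<epsilon> h K. \<epsilon> > 0 \<Longrightarrow> 0 < h \<Longrightarrow> h \<le> hmax \<Longrightarrow> K \<ge> 1 \<Longrightarrow>
      \<exists>i\<in>{1..K}. (err h i)\<^sup>2 \<le> c1 * \<delta> h * gam \<alpha> K + (P / \<epsilon>\<^sup>2 + Q) / gam \<alpha> K + c2 * \<delta> h + c3 * \<epsilon> powr \<kappa>"
    and kh_lim: "filterlim kh at_top (at_right 0)"
    and \<delta>gam_lim: "((\<lambda>h. \<delta> h * gam \<alpha> (kh h)) \<longlongrightarrow> 0) (at_right 0)"
  shows "((\<lambda>h. Min ((\<lambda>i. err h i) ` {1..kh h})) \<longlongrightarrow> 0) (at_right 0)"
proof (rule tendstoI)
  fix \<eta> :: real assume \<eta>: "\<eta> > 0"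
  have M: "M > 0" using apos[of 1] abdd[of 1] by simp
  obtain \<epsilon> where \<epsilon>: "\<epsilon> > 0" and \<epsilon>_small: "c3 * \<epsilon> powr \<kappa> \<le> \<eta>\<^sup>2 / 4"
    using exists_powr_le[of c3 \<kappa> "\<eta>\<^sup>2 / 4"] coeffs \<eta> by auto
  define W where "W = P / \<epsilon>\<^sup>2 + Q"
  define K0 where "K0 = nat \<lceil>M * (4 * W / \<eta>\<^sup>2)\<rceil> + 1"
  have "eventually (\<lambda>h. K0 \<le> kh h) (at_right 0)"
    using kh_lim unfolding filterlim_at_top by blast
  moreover have "((\<lambda>h. c1 * (\<delta> h * gam \<alpha> (kh h))) \<longlongrightarrow> c1 * 0) (at_right 0)"
    by (intro tendsto_intros \<delta>gam_lim)
  then have "eventually (\<lambda>h. c1 * (\<delta> h * gam \<alpha> (kh h)) < \<eta>\<^sup>2 / 4) (at_right 0)"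
    by (rule order_tendstoD) (use \<eta> in simp)
  moreover have "((\<lambda>h. c2 * \<delta> h) \<longlongrightarrow> c2 * 0) (at_right 0)" by (intro tendsto_intros \<delta>lim)
  then have "eventually (\<lambda>h. c2 * \<delta> h < \<eta>\<^sup>2 / 4) (at_right 0)"
    by (rule order_tendstoD) (use \<eta> in simp)
  moreover have "eventually (\<lambda>h. 0 < h \<and> h \<le> hmax) (at_right (0::real))"
    unfolding eventually_at_right_field using hmax by (intro exI[of _ hmax]) auto
  ultimately show "eventually (\<lambda>h. dist (Min ((\<lambda>i. err h i) ` {1..kh h})) 0 < \<eta>) (at_right 0)"
  proof eventually_elim
    case (elim h)
    define K where "K = kh h"
    have K: "K \<ge> 1" "K \<ge> K0" using elim(1) unfolding K_def K0_def by auto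
    obtain i where i: "i \<in> {1..K}"
      and err_i: "(err h i)\<^sup>2 \<le> c1 * \<delta> h * gam \<alpha> K + W / gam \<alpha> K + c2 * \<delta> h + c3 * \<epsilon> powr \<kappa>"
      using bound[OF \<epsilon> _ _ K(1)] elim(4) unfolding W_def by blast
    have K0: "M * (4 * W / \<eta>\<^sup>2) \<le> real K0" unfolding K0_def by linarith
    have "4 * W / \<eta>\<^sup>2 \<le> real K / M"
      using K0 K(2) M by (simp add: field_simps)
    also have "\<dots> \<le> gam \<alpha> K" by (rule gam_ge_div_bound[OF apos abdd])
    finally have "4 * W \<le> gam \<alpha> K * \<eta>\<^sup>2" using \<eta> by (simp add: field_simps)
    moreover have "0 < real K / M" using K M by simp
    then have "gam \<alpha> K > 0" using gam_ge_div_bound[of \<alpha> M K, OF apos abdd] by linarith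
    ultimately have "W / gam \<alpha> K \<le> \<eta>\<^sup>2 / 4" by (simp add: field_simps)
    moreover have "c1 * \<delta> h * gam \<alpha> K < \<eta>\<^sup>2 / 4"
      using elim(2) unfolding K_def by (simp add: mult.assoc)
    ultimately have "(err h i)\<^sup>2 < \<eta>\<^sup>2"
      using err_i elim(3) \<epsilon>_small by argo
    then have "err h i < \<eta>" using err_nonneg[of h i] \<eta> by (simp add: power_less_imp_less_base)
    moreover have "Min ((\<lambda>i. err h i) ` {1..K}) \<le> err h i" using i by (intro Min_le) auto
    moreover have "Min ((\<lambda>i. err h i) ` {1..K}) \<ge> 0"
      using Min_in[of "(\<lambda>i. err h i) ` {1..K}"] i err_nonneg by auto
    ultimately show ?case unfolding K_def by (simp add: dist_real_def)
  qed
qed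

lemma stopping_rule_convergence:
  fixes \<delta> :: "real \<Rightarrow> real" and \<alpha> :: "nat \<Rightarrow> real" and err :: "real \<Rightarrow> nat \<Rightarrow> real"
  assumes apos: "\<And>k. k \<ge> 1 \<Longrightarrow> \<alpha> k > 0" and abdd: "\<And>k. k \<ge> 1 \<Longrightarrow> \<alpha> k \<le> M"
    and \<delta>_nonneg: "\<And>h. h \<ge> 0 \<Longrightarrow> \<delta> h \<ge> 0" and \<delta>lim: "(\<delta> \<longlongrightarrow> 0) (at_right 0)"
    and \<delta>_mono: "\<And>h. 0 < h \<Longrightarrow> h \<le> hmax \<Longrightarrow> \<delta> h \<le> \<delta> hmax" and hmax: "hmax > 0"
    and err_nonneg: "\<And>h i. err h i \<ge> 0"
    and bound: "\<exists>c1 c2 c3 P Q \<kappa>. c1 \<ge> 0 \<and> c2 \<ge> 0 \<and> c3 \<ge> 0 \<and> P \<ge> 0 \<and> Q \<ge> 0 \<and> \<kappa> > 0 \<and>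
      (\<forall>\<epsilon> h K. \<epsilon> > 0 \<longrightarrow> 0 < h \<longrightarrow> h \<le> hmax \<longrightarrow> K \<ge> 1 \<longrightarrow>
        (\<exists>i\<in>{1..K}. (err h i)\<^sup>2
          \<le> c1 * \<delta> h * gam \<alpha> K + (P / \<epsilon>\<^sup>2 + Q) / gam \<alpha> K + c2 * \<delta> h + c3 * \<epsilon> powr \<kappa>))"
  shows "\<exists>C::real. \<exists>kh :: real \<Rightarrow> nat.
           (\<forall>h. 0 < h \<and> h \<le> hmax \<longrightarrow> (\<Sum>i=1..kh h. Hterm \<delta> h \<alpha> i) \<le> C) \<and>
           filterlim kh at_top (at_right 0) \<and>
           ((\<lambda>h. Min ((\<lambda>i. err h i) ` {1..kh h})) \<longlongrightarrow> 0) (at_right 0)"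
proof -
  define d where "d h = \<delta> h + (\<delta> h)\<^sup>2" for h
  have d_nonneg: "d h \<ge> 0" if "h > 0" for h using \<delta>_nonneg[of h] that by (simp add: d_def)
  have dlim: "(d \<longlongrightarrow> 0) (at_right 0)"
    using tendsto_add[OF \<delta>lim tendsto_power[OF \<delta>lim, of 2]] by (simp add: d_def[abs_def])
  obtain kh where kh_lim: "filterlim kh at_top (at_right 0)"
    and kh: "\<And>h. h > 0 \<Longrightarrow> kh h = 0 \<or> stop_weight \<alpha> (kh h) * d h \<le> sqrt (d h)"
    using exists_stopping_index[of d "stop_weight \<alpha>", OF d_nonneg dlim] by blast
  have kh_bounds: "(\<Sum>i=1..kh h. Hterm \<delta> h \<alpha> i) \<le> sqrt (d h) \<and> \<delta> h * gam \<alpha> (kh h) \<le> sqrt (d h)"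
    if "h > 0" for h
    unfolding d_def using that \<delta>_nonneg[of h] kh[OF that]
    by (intro stop_weight_index_bounds[OF apos]) (auto simp: d_def)
  have \<delta>gam: "((\<lambda>h. \<delta> h * gam \<alpha> (kh h)) \<longlongrightarrow> 0) (at_right 0)"
  proof (rule tendsto_sandwich)
    have pos: "eventually (\<lambda>h::real. h > 0) (at_right 0)" by (simp add: eventually_at_right_less)
    show "eventually (\<lambda>h. 0 \<le> \<delta> h * gam \<alpha> (kh h)) (at_right 0)"
      using pos by eventually_elim (use \<delta>_nonneg gam_nonneg[OF apos] in auto)
    show "eventually (\<lambda>h. \<delta> h * gam \<alpha> (kh h) \<le> sqrt (d h)) (at_right 0)"
      using pos by eventually_elim (use kh_bounds in auto)
    show "((\<lambda>h. sqrt (d h)) \<longlongrightarrow> 0) (at_right 0)"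
      using tendsto_real_sqrt[OF dlim] by simp
  qed simp
  obtain c1 c2 c3 P Q \<kappa> where coeffs: "c1 \<ge> 0" "c2 \<ge> 0" "c3 \<ge> 0" "P \<ge> 0" "Q \<ge> 0" "\<kappa> > 0"
    and bound': "\<And>\<epsilon> h K. \<epsilon> > 0 \<Longrightarrow> 0 < h \<Longrightarrow> h \<le> hmax \<Longrightarrow> K \<ge> 1 \<Longrightarrow>
        \<exists>i\<in>{1..K}. (err h i)\<^sup>2 \<le> c1 * \<delta> h * gam \<alpha> K + (P / \<epsilon>\<^sup>2 + Q) / gam \<alpha> K + c2 * \<delta> h + c3 * \<epsilon> powr \<kappa>"
    using bound by blast
  have "((\<lambda>h. Min ((\<lambda>i. err h i) ` {1..kh h})) \<longlongrightarrow> 0) (at_right 0)"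
    by (rule Min_error_tendsto_zero[where \<alpha>=\<alpha> and \<delta>=\<delta> and kh=kh,
          OF apos abdd \<delta>lim hmax err_nonneg coeffs bound' kh_lim \<delta>gam])
  moreover have "(\<Sum>i=1..kh h. Hterm \<delta> h \<alpha> i) \<le> sqrt (d hmax)" if "0 < h" "h \<le> hmax" for h
  proof -
    have "(\<delta> h)\<^sup>2 \<le> (\<delta> hmax)\<^sup>2"
      using \<delta>_mono[OF that] \<delta>_nonneg[of h] that by (intro power_mono) auto
    then have "d h \<le> d hmax" using \<delta>_mono[OF that] by (simp add: d_def)
    then show ?thesis using kh_bounds[of h] that by (meson order_trans real_sqrt_le_mono)
  qed
  ultimately show ?thesis using kh_lim by blast
qed

section \<open>Clamping to an interval\<close>

lemma clamp_nearest:
  fixes a b q v :: real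
  assumes "a \<le> q" "q \<le> b"
  shows "(v - max a (min b v))\<^sup>2 \<le> (v - q)\<^sup>2"
  unfolding abs_le_square_iff[symmetric] using assms by (auto simp: max_def min_def abs_if)

lemma clamp_nearest_unique:
  fixes a b q v :: real
  assumes "a \<le> b" "a \<le> q" "q \<le> b" "(v - q)\<^sup>2 = (v - max a (min b v))\<^sup>2"
  shows "q = max a (min b v)"
proof -
  have "\<bar>v - q\<bar> = \<bar>v - max a (min b v)\<bar>"
    using assms(4) by (metis abs_le_square_iff order_antisym order_refl)
  then show ?thesis using assms(1-3) by (auto simp: max_def min_def abs_if split: if_splits)
qed

lemma clamp_obtuse:
  fixes a b w l :: real
  assumes "a \<le> w" "w \<le> b"
  shows "(l - max a (min b l)) * (w - max a (min b l)) \<le> 0"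
  using assms by (auto simp: max_def min_def mult_le_0_iff)

lemma clamp_shift_sign:
  fixes a b u p :: real
  assumes "a \<le> u" "u \<le> b"
  shows "0 \<le> (max a (min b (u + p)) - u) * p"
  using assms by (auto simp: max_def min_def zero_le_mult_iff)

lemma clamp_fixed_point_sign:
  fixes a b u p v :: real
  assumes "a \<le> u" "u \<le> b" "(max a (min b (u + p)) - u) * p = 0" "a \<le> v" "v \<le> b"
  shows "p * (v - u) \<le> 0"
proof (cases "p = 0")
  case False
  then have fixed: "max a (min b (u + p)) = u" using assms(3) by simp
  show ?thesis
  proof (cases "p > 0")
    case True
    then have "u = b" using fixed assms(1,2) by (auto simp: max_def min_def split: if_splits)
    then show ?thesis using True assms(5) by (simp add: mult_le_0_iff)
  next
    case False
    then have "u = a" using fixed assms(1,2) \<open>p \<noteq> 0\<close> by (auto simp: max_def min_def split: if_splits)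
    then show ?thesis using False assms(4) by (simp add: mult_le_0_iff)
  qed
qed simp

text \<open>On the set \<open>I\<close> the source condition \<open>u\<^sup>\<dagger> = P(S\<^sup>*w)\<close> turns \<open>l - S\<^sup>*w\<close> into an upper bound
  for the error.  Off \<open>I\<close>, the sign condition \<open>p\<^sup>\<dagger>(u - u\<^sup>\<dagger>) \<le> 0\<close> gives
  \<open>\<bar>u - u\<^sup>\<dagger>\<bar> \<le> -p\<^sup>\<dagger>(u - u\<^sup>\<dagger>)/\<epsilon>\<close> where \<open>\<bar>p\<^sup>\<dagger>\<bar> \<ge> \<epsilon>\<close>; what is left is the set where
  \<open>0 < \<bar>p\<^sup>\<dagger>\<bar> < \<epsilon>\<close>, on which the error is bounded by \<open>B\<close>.\<close>

lemma clamp_error_pointwise: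
  fixes a b ud uk l sw p R B \<epsilon> ind :: real
  assumes ab: "a \<le> b" and ud: "a \<le> ud" "ud \<le> b" and uk: "a \<le> uk" "uk \<le> b"
    and uk_clamp: "uk = max a (min b l)" and err: "\<bar>uk - ud\<bar> \<le> B"
    and sign: "p * (uk - ud) \<le> 0"
    and source: "inI \<Longrightarrow> ud = max a (min b sw)"
    and p_nonzero: "\<not> inI \<Longrightarrow> p \<noteq> 0"
    and sw: "\<bar>sw - ud\<bar> \<le> R" and \<epsilon>: "\<epsilon> > 0"
    and ind: "ind = (if \<not> inI \<and> 0 < \<bar>p\<bar> \<and> \<bar>p\<bar> < \<epsilon> then 1 else 0)"
  shows "(uk - ud)\<^sup>2 \<le> l * (uk - ud) - sw * (uk - ud) + (R * B) * ind - (R / \<epsilon>) * (p * (uk - ud))"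
proof -
  define e where "e = uk - ud"
  have "(l - uk) * (ud - uk) \<le> 0" using clamp_obtuse[OF ud, of l] uk_clamp by simp
  then have proj: "e\<^sup>2 \<le> (l - ud) * e" by (simp add: e_def power2_eq_square algebra_simps)
  have B: "B \<ge> 0" and R: "R \<ge> 0" using err sw by linarith+
  have sign': "0 \<le> - (p * e) / \<epsilon>" using sign \<epsilon> by (simp add: e_def divide_nonpos_pos)
  have "(sw - ud) * e \<le> R * (B * ind + - (p * e) / \<epsilon>)"
  proof (cases inI)
    case True
    have "(sw - ud) * e \<le> 0" using clamp_obtuse[OF uk, of sw] source[OF True] by (simp add: e_def algebra_simps)
    also have "0 \<le> R * (B * ind + - (p * e) / \<epsilon>)" using R B sign' ind by simp
    finally show ?thesis .
  next
    case False
    have "\<bar>e\<bar> \<le> B * ind + - (p * e) / \<epsilon>"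
    proof (cases "\<bar>p\<bar> < \<epsilon>")
      case True
      then show ?thesis using ind False p_nonzero[OF False] err sign' by (simp add: e_def)
    next
      case False
      have "- (p * e) = \<bar>p\<bar> * \<bar>e\<bar>" using abs_of_nonpos[OF sign] by (simp add: e_def abs_mult)
      moreover have "\<epsilon> * \<bar>e\<bar> \<le> \<bar>p\<bar> * \<bar>e\<bar>" using False by (intro mult_right_mono) auto
      ultimately show ?thesis using \<epsilon> ind False by (simp add: field_simps)
    qed
    then have "R * \<bar>e\<bar> \<le> R * (B * ind + - (p * e) / \<epsilon>)" using R by (rule mult_left_mono)
    moreover have "(sw - ud) * e \<le> R * \<bar>e\<bar>"
      using sw abs_ge_self[of "(sw - ud) * e"] by (simp add: abs_mult mult_right_mono order_trans)
    ultimately show ?thesis by linarith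
  qed
  moreover have "(l - ud) * e = l * e - sw * e + (sw - ud) * e" by (simp add: algebra_simps)
  moreover have "R * (B * ind + - (p * e) / \<epsilon>) = (R * B) * ind - (R / \<epsilon>) * (p * e)"
    using \<epsilon> by (simp add: field_simps)
  ultimately have "e\<^sup>2 \<le> l * e - sw * e + (R * B) * ind - (R / \<epsilon>) * (p * e)" using proj by linarith
  then show ?thesis by (simp add: e_def)
qed

section \<open>Square-integrable functions\<close>

lemma abs_mult_le_add_squares: "\<bar>a * b\<bar> \<le> a\<^sup>2 + (b::real)\<^sup>2"
proof -
  have "2 * (\<bar>a\<bar> * \<bar>b\<bar>) \<le> a\<^sup>2 + b\<^sup>2" using sum_squares_bound[of "\<bar>a\<bar>" "\<bar>b\<bar>"] by simp
  then show ?thesis unfolding abs_mult using zero_le_mult_iff[of "\<bar>a\<bar>" "\<bar>b\<bar>"] by linarith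
qed

lemma square_lincomb_le: "(a * x + b * y)\<^sup>2 \<le> 2 * a\<^sup>2 * x\<^sup>2 + 2 * b\<^sup>2 * (y::real)\<^sup>2"
  using zero_le_power2[of "a * x - b * y"] by (simp add: power2_eq_square algebra_simps)

lemma AE_eq_0_if_integral_nonpos:
  fixes f :: "'a \<Rightarrow> real"
  assumes "integrable M f" "AE x in M. 0 \<le> f x" "integral\<^sup>L M f \<le> 0"
  shows "AE x in M. f x = 0"
  using integral_nonneg_eq_0_iff_AE[OF assms(1,2)] integral_nonneg_AE[OF assms(2)] assms(3) by simp

lemma L2_mult_integrable:
  assumes "f \<in> L2 \<Omega>" "g \<in> L2 \<Omega>"
  shows "integrable (lebesgue_on \<Omega>) (\<lambda>x. f x * g x)"
proof (rule Bochner_Integration.integrable_bound[where f="\<lambda>x. (f x)\<^sup>2 + (g x)\<^sup>2"])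
  show "integrable (lebesgue_on \<Omega>) (\<lambda>x. (f x)\<^sup>2 + (g x)\<^sup>2)" using assms by (auto simp: L2_def)
  have "f \<in> borel_measurable (lebesgue_on \<Omega>)" "g \<in> borel_measurable (lebesgue_on \<Omega>)"
    using assms by (simp_all add: L2_def)
  then show "(\<lambda>x. f x * g x) \<in> borel_measurable (lebesgue_on \<Omega>)" by measurable
qed (simp add: abs_mult_le_add_squares)

lemma L2_lincomb:
  assumes "f \<in> L2 \<Omega>" "g \<in> L2 \<Omega>"
  shows "(\<lambda>x. a * f x + b * g x) \<in> L2 \<Omega>"
proof -
  have "f \<in> borel_measurable (lebesgue_on \<Omega>)" "g \<in> borel_measurable (lebesgue_on \<Omega>)"
    using assms by (simp_all add: L2_def)
  then have m: "(\<lambda>x. a * f x + b * g x) \<in> borel_measurable (lebesgue_on \<Omega>)" by measurable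
  have "integrable (lebesgue_on \<Omega>) (\<lambda>x. (a * f x + b * g x)\<^sup>2)"
  proof (rule Bochner_Integration.integrable_bound[where f="\<lambda>x. 2 * a\<^sup>2 * (f x)\<^sup>2 + 2 * b\<^sup>2 * (g x)\<^sup>2"])
    show "integrable (lebesgue_on \<Omega>) (\<lambda>x. 2 * a\<^sup>2 * (f x)\<^sup>2 + 2 * b\<^sup>2 * (g x)\<^sup>2)"
      using assms by (auto simp: L2_def)
  qed (use m in \<open>simp_all add: square_lincomb_le\<close>)
  then show ?thesis using m by (simp add: L2_def)
qed

lemma L2_diff: "f \<in> L2 \<Omega> \<Longrightarrow> g \<in> L2 \<Omega> \<Longrightarrow> (\<lambda>x. f x - g x) \<in> L2 \<Omega>"
  using L2_lincomb[of f \<Omega> g 1 "-1"] by simp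

lemma L2_bounded:
  assumes "\<Omega> \<in> lmeasurable" "f \<in> borel_measurable (lebesgue_on \<Omega>)" "AE x in lebesgue_on \<Omega>. \<bar>f x\<bar> \<le> B"
  shows "f \<in> L2 \<Omega>"
proof -
  have "integrable (lebesgue_on \<Omega>) (\<lambda>x. (f x)\<^sup>2)"
  proof (rule Bochner_Integration.integrable_bound[where f="\<lambda>x. B\<^sup>2"])
    show "integrable (lebesgue_on \<Omega>) (\<lambda>x. B\<^sup>2)"
      using finite_measure.integrable_const finite_measure_lebesgue_on assms(1) by blast
    show "AE x in lebesgue_on \<Omega>. norm ((f x)\<^sup>2) \<le> norm (B\<^sup>2)"
      using assms(3) by eventually_elim (simp add: abs_le_square_iff[symmetric])
  qed (use assms(2) in measurable)
  then show ?thesis using assms(2) by (simp add: L2_def)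
qed

lemma L2_sum:
  assumes "finite I" "\<And>i. i \<in> I \<Longrightarrow> f i \<in> L2 \<Omega>"
  shows "(\<lambda>x. \<Sum>i\<in>I. c i * f i x) \<in> L2 \<Omega>"
  using assms
proof (induction I rule: finite_induct)
  case empty
  show ?case by (simp add: L2_def)
next
  case (insert j I)
  have "(\<lambda>x. c j * f j x + 1 * (\<Sum>i\<in>I. c i * f i x)) \<in> L2 \<Omega>"
    using insert by (intro L2_lincomb) auto
  then show ?case using insert by simp
qed

lemma L2inner_sum_left:
  assumes "finite I" "\<And>i. i \<in> I \<Longrightarrow> f i \<in> L2 \<Omega>" "g \<in> L2 \<Omega>"
  shows "L2inner \<Omega> (\<lambda>x. \<Sum>i\<in>I. c i * f i x) g = (\<Sum>i\<in>I. c i * L2inner \<Omega> (f i) g)"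
proof -
  have "L2inner \<Omega> (\<lambda>x. \<Sum>i\<in>I. c i * f i x) g
      = integral\<^sup>L (lebesgue_on \<Omega>) (\<lambda>x. \<Sum>i\<in>I. c i * (f i x * g x))"
    unfolding L2inner_def by (simp add: sum_distrib_right mult.assoc)
  also have "\<dots> = (\<Sum>i\<in>I. c i * L2inner \<Omega> (f i) g)"
    using assms L2_mult_integrable
    by (subst Bochner_Integration.integral_sum) (auto simp: L2inner_def)
  finally show ?thesis .
qed

lemma L2inner_commute: "L2inner \<Omega> f g = L2inner \<Omega> g f"
  by (simp add: L2inner_def mult.commute)

lemma L2inner_self_nonneg: "0 \<le> L2inner \<Omega> f f"
  unfolding L2inner_def by (intro integral_nonneg_AE AE_I2) simp

lemma L2norm_nonneg: "0 \<le> L2norm \<Omega> f"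
  by (simp add: L2norm_def L2inner_self_nonneg)

lemma L2norm_sq: "(L2norm \<Omega> f)\<^sup>2 = L2inner \<Omega> f f"
  by (simp add: L2norm_def L2inner_self_nonneg)

lemma L2norm_le_0_AE_eq_0:
  assumes "f \<in> L2 \<Omega>" "L2norm \<Omega> f \<le> 0"
  shows "AE x in lebesgue_on \<Omega>. f x = 0"
proof -
  have "AE x in lebesgue_on \<Omega>. f x * f x = 0"
    using assms by (intro AE_eq_0_if_integral_nonpos L2_mult_integrable)
      (auto simp: L2norm_def L2inner_def)
  then show ?thesis by simp
qed

section \<open>Box constraints\<close>

locale box_constraints =
  fixes \<Omega> :: "'a::euclidean_space set" and ua ub :: "'a \<Rightarrow> real"
  assumes \<Omega>_bounded: "bounded \<Omega>" and \<Omega>_meas: "\<Omega> \<in> sets lebesgue"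
    and ua: "Linfty \<Omega> ua" and ub: "Linfty \<Omega> ub"
    and ua_ub: "AE x in lebesgue_on \<Omega>. ua x \<le> ub x"
begin

abbreviation "\<mu> \<equiv> lebesgue_on \<Omega>"
abbreviation "U \<equiv> Uad \<Omega> ua ub"

lemma \<Omega>_lmeasurable: "\<Omega> \<in> lmeasurable"
  using \<Omega>_bounded \<Omega>_meas by (rule bounded_set_imp_lmeasurable)

lemma ua_measurable [measurable]: "ua \<in> borel_measurable \<mu>"
  and ub_measurable [measurable]: "ub \<in> borel_measurable \<mu>"
  using ua ub by (auto simp: Linfty_def)

definition box_bound :: real where
  "box_bound = (SOME B. B \<ge> 0 \<and> (AE x in \<mu>. \<bar>ua x\<bar> \<le> B) \<and> (AE x in \<mu>. \<bar>ub x\<bar> \<le> B))"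

lemma box_bound:
  "box_bound \<ge> 0 \<and> (AE x in \<mu>. \<bar>ua x\<bar> \<le> box_bound) \<and> (AE x in \<mu>. \<bar>ub x\<bar> \<le> box_bound)"
proof -
  obtain Ba Bb where Ba: "AE x in \<mu>. \<bar>ua x\<bar> \<le> Ba" and Bb: "AE x in \<mu>. \<bar>ub x\<bar> \<le> Bb"
    using ua ub by (auto simp: Linfty_def)
  have "max 0 (max Ba Bb) \<ge> 0 \<and> (AE x in \<mu>. \<bar>ua x\<bar> \<le> max 0 (max Ba Bb))
      \<and> (AE x in \<mu>. \<bar>ub x\<bar> \<le> max 0 (max Ba Bb))"
    using Ba Bb by (auto elim: AE_mp)
  then show ?thesis unfolding box_bound_def by (rule someI)
qed

lemma Uad_bounds:
  assumes "v \<in> U"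
  shows "AE x in \<mu>. \<bar>v x\<bar> \<le> box_bound \<and> ua x \<le> v x \<and> v x \<le> ub x"
  using assms box_bound by (auto simp: Uad_def elim!: AE_mp)

lemma Uad_L2: "v \<in> U \<Longrightarrow> v \<in> L2 \<Omega>"
  by (simp add: Uad_def)

definition box_clamp :: "('a \<Rightarrow> real) \<Rightarrow> 'a \<Rightarrow> real" where
  "box_clamp v x = max (ua x) (min (ub x) (v x))"

lemma box_clamp_in_Uad:
  assumes [measurable]: "v \<in> borel_measurable \<mu>"
  shows "box_clamp v \<in> U"
proof -
  have "AE x in \<mu>. \<bar>box_clamp v x\<bar> \<le> box_bound"
    using box_bound ua_ub by (auto simp: box_clamp_def elim!: AE_mp)
  then have "box_clamp v \<in> L2 \<Omega>"
    by (intro L2_bounded[OF \<Omega>_lmeasurable]) (auto simp: box_clamp_def[abs_def])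
  moreover have "AE x in \<mu>. ua x \<le> box_clamp v x \<and> box_clamp v x \<le> ub x"
    using ua_ub by eventually_elim (auto simp: box_clamp_def)
  ultimately show ?thesis by (simp add: Uad_def)
qed

lemma box_clamp_pointwise_nearest:
  assumes "q \<in> U"
  shows "AE x in \<mu>. (v x - box_clamp v x)\<^sup>2 \<le> (v x - q x)\<^sup>2"
  using Uad_bounds[OF assms] by eventually_elim (auto simp: box_clamp_def intro: clamp_nearest)

lemma L2norm_diff_eq_sqrt_integral:
  "L2norm \<Omega> (\<lambda>x. v x - q x) = sqrt (integral\<^sup>L \<mu> (\<lambda>x. (v x - q x)\<^sup>2))"
  by (simp add: L2norm_def L2inner_def power2_eq_square)

lemma box_clamp_nearest_in_Uad:
  assumes v: "v \<in> L2 \<Omega>" and q: "q \<in> U"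
  shows "L2norm \<Omega> (\<lambda>x. v x - box_clamp v x) \<le> L2norm \<Omega> (\<lambda>x. v x - q x)"
proof -
  have int: "integrable \<mu> (\<lambda>x. (v x - w x)\<^sup>2)" if "w \<in> U" for w
    using L2_diff[OF v Uad_L2[OF that]] by (simp add: L2_def)
  have "box_clamp v \<in> U" using v by (intro box_clamp_in_Uad) (simp add: L2_def)
  then have "integral\<^sup>L \<mu> (\<lambda>x. (v x - box_clamp v x)\<^sup>2) \<le> integral\<^sup>L \<mu> (\<lambda>x. (v x - q x)\<^sup>2)"
    by (intro integral_mono_AE int q box_clamp_pointwise_nearest)
  then show ?thesis by (simp add: L2norm_diff_eq_sqrt_integral)
qed

lemma nearest_in_Uad_AE_eq_box_clamp:
  assumes v: "v \<in> L2 \<Omega>" and p: "p \<in> U"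
    and nearest: "L2norm \<Omega> (\<lambda>x. v x - p x) \<le> L2norm \<Omega> (\<lambda>x. v x - box_clamp v x)"
  shows "AE x in \<mu>. p x = box_clamp v x"
proof -
  have cU: "box_clamp v \<in> U" using v by (intro box_clamp_in_Uad) (simp add: L2_def)
  define f where "f x = (v x - p x)\<^sup>2 - (v x - box_clamp v x)\<^sup>2" for x
  have int: "integrable \<mu> (\<lambda>x. (v x - q x)\<^sup>2)" if "q \<in> U" for q
    using L2_diff[OF v Uad_L2[OF that]] by (simp add: L2_def)
  have "integral\<^sup>L \<mu> f = integral\<^sup>L \<mu> (\<lambda>x. (v x - p x)\<^sup>2) - integral\<^sup>L \<mu> (\<lambda>x. (v x - box_clamp v x)\<^sup>2)"
    unfolding f_def using int[OF p] int[OF cU] by (rule Bochner_Integration.integral_diff)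
  also have "\<dots> \<le> 0"
    using nearest by (simp add: L2norm_diff_eq_sqrt_integral)
  finally have "integral\<^sup>L \<mu> f \<le> 0" .
  moreover have "integrable \<mu> f" unfolding f_def using int[OF p] int[OF cU] by simp
  moreover have "AE x in \<mu>. 0 \<le> f x"
    using box_clamp_pointwise_nearest[OF p] unfolding f_def by eventually_elim simp
  ultimately have "AE x in \<mu>. f x = 0" by (intro AE_eq_0_if_integral_nonpos)
  then show ?thesis
    using Uad_bounds[OF p] ua_ub
    by eventually_elim (auto simp: f_def box_clamp_def intro: clamp_nearest_unique)
qed

text \<open>\<open>L2proj\<close> is defined by a choice, so only its values almost everywhere are determined.\<close>

lemma L2proj_Uad:
  assumes v: "v \<in> L2 \<Omega>"
  shows "L2proj \<Omega> U v \<in> U" and "AE x in \<mu>. L2proj \<Omega> U v x = box_clamp v x"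
proof -
  have "\<exists>p. p \<in> U \<and> (\<forall>q\<in>U. L2norm \<Omega> (\<lambda>x. v x - p x) \<le> L2norm \<Omega> (\<lambda>x. v x - q x))"
    using v box_clamp_nearest_in_Uad by (intro exI[of _ "box_clamp v"]) (auto intro: box_clamp_in_Uad simp: L2_def)
  then have proj: "L2proj \<Omega> U v \<in> U \<and>
    (\<forall>q\<in>U. L2norm \<Omega> (\<lambda>x. v x - L2proj \<Omega> U v x) \<le> L2norm \<Omega> (\<lambda>x. v x - q x))"
    unfolding L2proj_def by (rule someI_ex)
  then show "L2proj \<Omega> U v \<in> U" by simp
  have "box_clamp v \<in> U" using v by (intro box_clamp_in_Uad) (simp add: L2_def)
  with proj show "AE x in \<mu>. L2proj \<Omega> U v x = box_clamp v x"
    by (intro nearest_in_Uad_AE_eq_box_clamp[OF v]) auto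
qed

lemma Uad_convex:
  assumes u: "u \<in> U" and v: "v \<in> U" and t: "0 \<le> t" "t \<le> 1"
  shows "(\<lambda>x. (1 - t) * u x + t * v x) \<in> U"
proof -
  have "(\<lambda>x. (1 - t) * u x + t * v x) \<in> L2 \<Omega>" using u v by (intro L2_lincomb Uad_L2)
  moreover have "AE x in \<mu>. ua x \<le> (1 - t) * u x + t * v x \<and> (1 - t) * u x + t * v x \<le> ub x"
    using Uad_bounds[OF u] Uad_bounds[OF v]
  proof eventually_elim
    case (elim x)
    then show ?case
      using segment_bound_lemma[of "ua x" "u x" "v x" t] convex_bound_le[of "u x" "ub x" "v x" "1 - t" t] t
      by simp
  qed
  ultimately show ?thesis by (simp add: Uad_def)
qed

end

section \<open>The constrained least-squares problem\<close>

lemma nonneg_if_quadratic_perturbation_nonneg: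
  fixes a N :: real
  assumes N: "N \<ge> 0" and quad: "\<And>t. 0 < t \<Longrightarrow> t \<le> 1 \<Longrightarrow> 0 \<le> 2 * a + t * N"
  shows "0 \<le> a"
proof (rule ccontr)
  assume "\<not> 0 \<le> a"
  define t where "t = min 1 (- a / (N + 1))"
  have "0 < - a / (N + 1)" using \<open>\<not> 0 \<le> a\<close> N by (intro divide_pos_pos) auto
  then have t: "0 < t" "t \<le> 1" by (auto simp: t_def)
  have "t * N \<le> - a / (N + 1) * N" using N by (intro mult_right_mono) (auto simp: t_def)
  also have "\<dots> = - a * (N / (N + 1))" by simp
  also have "\<dots> < - a * 1" using \<open>\<not> 0 \<le> a\<close> N by (intro mult_strict_left_mono) auto
  finally show False using quad[OF t] \<open>\<not> 0 \<le> a\<close> by linarith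
qed

locale box_least_squares = box_constraints \<Omega> ua ub
  for \<Omega> :: "'a::euclidean_space set" and ua ub :: "'a \<Rightarrow> real" +
  fixes S :: "('a \<Rightarrow> real) \<Rightarrow> 'y::real_inner" and Sadj :: "'y \<Rightarrow> 'a \<Rightarrow> real"
    and z :: 'y and udag :: "'a \<Rightarrow> real"
  assumes S_lin: "bounded_linear_L2 \<Omega> S" and S_adj: "is_adjoint \<Omega> S Sadj"
    and udag_mem: "udag \<in> Uad \<Omega> ua ub"
    and udag_min: "\<And>v. v \<in> Uad \<Omega> ua ub \<Longrightarrow> (norm (S udag - z))\<^sup>2 / 2 \<le> (norm (S v - z))\<^sup>2 / 2"
begin

lemma S_lincomb: "f \<in> L2 \<Omega> \<Longrightarrow> g \<in> L2 \<Omega> \<Longrightarrow> S (\<lambda>x. a * f x + b * g x) = a *\<^sub>R S f + b *\<^sub>R S g"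
  using S_lin by (simp add: bounded_linear_L2_def)

lemma S_diff: "f \<in> L2 \<Omega> \<Longrightarrow> g \<in> L2 \<Omega> \<Longrightarrow> S (\<lambda>x. f x - g x) = S f - S g"
  using S_lincomb[of f g 1 "-1"] by simp

lemma S_adjoint: "f \<in> L2 \<Omega> \<Longrightarrow> inner (S f) y = L2inner \<Omega> f (Sadj y)"
  using S_adj by (simp add: is_adjoint_def)

lemma Sadj_L2: "Sadj y \<in> L2 \<Omega>"
  using S_adj by (simp add: is_adjoint_def)

lemma udag_L2: "udag \<in> L2 \<Omega>"
  using udag_mem by (rule Uad_L2)

definition pdag :: "'a \<Rightarrow> real" where
  "pdag = Sadj (z - S udag)"

lemma pdag_L2: "pdag \<in> L2 \<Omega>"
  unfolding pdag_def by (rule Sadj_L2)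

text \<open>First-order optimality of \<open>u\<^sup>\<dagger>\<close>, obtained by differentiating the objective along the
  segment from \<open>u\<^sup>\<dagger>\<close> to \<open>v\<close>.\<close>

lemma variational_inequality:
  assumes v: "v \<in> U"
  shows "L2inner \<Omega> (\<lambda>x. v x - udag x) pdag \<le> 0"
proof -
  define d where "d = S udag - z"
  define b where "b = S v - S udag"
  have "0 \<le> inner d b"
  proof (rule nonneg_if_quadratic_perturbation_nonneg)
    fix t :: real assume t: "0 < t" "t \<le> 1"
    define vt where "vt x = (1 - t) * udag x + t * v x" for x
    have "S vt = (1 - t) *\<^sub>R S udag + t *\<^sub>R S v"
      unfolding vt_def[abs_def] by (rule S_lincomb[OF udag_L2 Uad_L2[OF v]])
    then have "S vt - z = d + t *\<^sub>R b" by (simp add: d_def b_def algebra_simps)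
    then have "(norm (S vt - z))\<^sup>2 = (norm d)\<^sup>2 + t * (2 * inner d b + t * (norm b)\<^sup>2)"
      by (simp add: power2_norm_eq_inner inner_add_left inner_add_right inner_commute algebra_simps)
    moreover have "vt \<in> U" unfolding vt_def[abs_def] using t by (intro Uad_convex udag_mem v) auto
    then have "(norm d)\<^sup>2 \<le> (norm (S vt - z))\<^sup>2" using udag_min by (simp add: d_def)
    ultimately show "0 \<le> 2 * inner d b + t * (norm b)\<^sup>2" using t by (simp add: zero_le_mult_iff)
  qed simp
  moreover have "L2inner \<Omega> (\<lambda>x. v x - udag x) pdag = inner b (z - S udag)"
    using S_adjoint[OF L2_diff[OF Uad_L2[OF v] udag_L2], of "z - S udag"]
    by (simp add: pdag_def S_diff[OF Uad_L2[OF v] udag_L2] b_def)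
  moreover have "inner b (z - S udag) = - inner d b"
    by (simp add: d_def inner_commute inner_diff_right)
  ultimately show ?thesis by simp
qed

lemma pdag_complementarity: "AE x in \<mu>. (box_clamp (\<lambda>x. udag x + pdag x) x - udag x) * pdag x = 0"
proof -
  define v where "v = box_clamp (\<lambda>x. udag x + pdag x)"
  have "v \<in> U" unfolding v_def using udag_L2 pdag_L2
    by (intro box_clamp_in_Uad borel_measurable_add) (auto simp: L2_def)
  then have "integrable \<mu> (\<lambda>x. (v x - udag x) * pdag x)"
    by (intro L2_mult_integrable L2_diff Uad_L2 udag_L2 pdag_L2)
  moreover have "AE x in \<mu>. 0 \<le> (v x - udag x) * pdag x"
    using Uad_bounds[OF udag_mem] by eventually_elim (auto simp: v_def box_clamp_def intro: clamp_shift_sign)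
  moreover have "integral\<^sup>L \<mu> (\<lambda>x. (v x - udag x) * pdag x) \<le> 0"
    using variational_inequality[OF \<open>v \<in> U\<close>] by (simp add: L2inner_def)
  ultimately show ?thesis unfolding v_def by (rule AE_eq_0_if_integral_nonpos)
qed

lemma pdag_sign:
  assumes v: "v \<in> U"
  shows "AE x in \<mu>. pdag x * (v x - udag x) \<le> 0"
  using pdag_complementarity Uad_bounds[OF udag_mem] Uad_bounds[OF v]
  by eventually_elim (auto simp: box_clamp_def intro: clamp_fixed_point_sign)

lemma S_bounded_on_Uad:
  obtains M where "M \<ge> 0" "\<And>v. v \<in> U \<Longrightarrow> norm (S v) \<le> M"
proof -
  obtain K where K: "\<And>f. f \<in> L2 \<Omega> \<Longrightarrow> norm (S f) \<le> K * L2norm \<Omega> f"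
    using S_lin unfolding bounded_linear_L2_def by blast
  define M where "M = \<bar>K\<bar> * sqrt (box_bound\<^sup>2 * measure \<mu> \<Omega>)"
  have "norm (S v) \<le> M" if v: "v \<in> U" for v
  proof -
    have "AE x in \<mu>. v x * v x \<le> box_bound\<^sup>2"
      using Uad_bounds[OF v]
    proof eventually_elim
      case (elim x)
      then have "\<bar>v x\<bar> * \<bar>v x\<bar> \<le> box_bound * box_bound" by (intro mult_mono) auto
      then show ?case by (simp add: power2_eq_square)
    qed
    then have "L2inner \<Omega> v v \<le> integral\<^sup>L \<mu> (\<lambda>x. box_bound\<^sup>2)"
      unfolding L2inner_def using finite_measure_lebesgue_on[OF \<Omega>_lmeasurable]
      by (intro integral_mono_AE L2_mult_integrable Uad_L2 v finite_measure.integrable_const)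
    then have "L2norm \<Omega> v \<le> sqrt (box_bound\<^sup>2 * measure \<mu> \<Omega>)" by (simp add: L2norm_def mult.commute)
    then have "K * L2norm \<Omega> v \<le> M"
      unfolding M_def using L2norm_nonneg[of \<Omega> v]
      by (meson abs_ge_self abs_ge_zero mult_mono order_trans)
    then show "norm (S v) \<le> M" using K[OF Uad_L2[OF v]] by linarith
  qed
  moreover have "M \<ge> 0" by (simp add: M_def)
  ultimately show thesis using that by blast
qed

end

section \<open>The Bregman iteration with exact subproblem solves\<close>

locale exact_bregman_iteration = box_least_squares \<Omega> ua ub S Sadj z udag
  for \<Omega> :: "'a::euclidean_space set" and ua ub :: "'a \<Rightarrow> real"
    and S :: "('a \<Rightarrow> real) \<Rightarrow> 'y::real_inner" and Sadj :: "'y \<Rightarrow> 'a \<Rightarrow> real"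
    and z :: 'y and udag :: "'a \<Rightarrow> real" +
  fixes Sh :: "real \<Rightarrow> ('a \<Rightarrow> real) \<Rightarrow> 'y" and Shadj :: "real \<Rightarrow> 'y \<Rightarrow> 'a \<Rightarrow> real"
    and \<delta> :: "real \<Rightarrow> real" and \<alpha> :: "nat \<Rightarrow> real" and hmax :: real
    and u :: "real \<Rightarrow> nat \<Rightarrow> 'a \<Rightarrow> real"
  assumes Sh_lin: "\<And>h. h \<ge> 0 \<Longrightarrow> bounded_linear_L2 \<Omega> (Sh h)"
    and Sh_adj: "\<And>h. h \<ge> 0 \<Longrightarrow> is_adjoint \<Omega> (Sh h) (Shadj h)"
    and \<delta>_mono: "mono_on {0..} \<delta>" and \<delta>_nonneg: "\<And>h. h \<ge> 0 \<Longrightarrow> \<delta> h \<ge> 0"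
    and \<delta>_bound: "\<And>h v. h \<ge> 0 \<Longrightarrow> v \<in> Uad \<Omega> ua ub \<Longrightarrow>
         norm (S v - Sh h v)
         + L2norm \<Omega> (\<lambda>x. Sadj (Sh h v - z) x - Shadj h (Sh h v - z) x) \<le> \<delta> h"
    and \<alpha>_pos: "\<And>k. k \<ge> 1 \<Longrightarrow> \<alpha> k > 0"
    and \<alpha>_bdd: "\<exists>M. \<forall>k\<ge>1. \<alpha> k \<le> M"
    and asc: "active_set_condition \<Omega> ua ub Sadj S z udag"
    and u_step: "\<And>h k. 0 < h \<Longrightarrow> h \<le> hmax \<Longrightarrow> k \<ge> 1 \<Longrightarrow>
         u h k \<in> Uad \<Omega> ua ub \<and>
         bregman_B \<Omega> ua ub (Sh h) (Shadj h) z (\<alpha> k)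
           (bregman_lambda (Sh h) (Shadj h) z \<alpha> (u h) (k - 1)) (u h k) \<le> 0"
begin

lemma Sh_diff:
  assumes "h \<ge> 0" "f \<in> L2 \<Omega>" "g \<in> L2 \<Omega>"
  shows "Sh h (\<lambda>x. f x - g x) = Sh h f - Sh h g"
proof -
  have "Sh h (\<lambda>x. 1 * f x + (- 1) * g x) = 1 *\<^sub>R Sh h f + (- 1) *\<^sub>R Sh h g"
    using Sh_lin[OF assms(1)] assms(2,3) unfolding bounded_linear_L2_def by blast
  then show ?thesis by simp
qed

lemma Sh_adjoint: "h \<ge> 0 \<Longrightarrow> f \<in> L2 \<Omega> \<Longrightarrow> inner (Sh h f) y = L2inner \<Omega> f (Shadj h y)"
  using Sh_adj by (simp add: is_adjoint_def)

lemma Shadj_L2: "h \<ge> 0 \<Longrightarrow> Shadj h y \<in> L2 \<Omega>"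
  using Sh_adj by (simp add: is_adjoint_def)

lemma discretization_error:
  assumes "h \<ge> 0" "v \<in> U"
  shows "norm (Sh h v - S v) \<le> \<delta> h"
  using \<delta>_bound[OF assms] L2norm_nonneg[of \<Omega> "\<lambda>x. Sadj (Sh h v - z) x - Shadj h (Sh h v - z) x"]
    norm_minus_commute[of "Sh h v" "S v"] by linarith

lemma iterate_in_Uad: "0 < h \<Longrightarrow> h \<le> hmax \<Longrightarrow> k \<ge> 1 \<Longrightarrow> u h k \<in> U"
  using u_step by blast

abbreviation lam :: "real \<Rightarrow> nat \<Rightarrow> 'a \<Rightarrow> real" where
  "lam h \<equiv> bregman_lambda (Sh h) (Shadj h) z \<alpha> (u h)"

lemma lam_L2: "h \<ge> 0 \<Longrightarrow> lam h k \<in> L2 \<Omega>"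
  unfolding bregman_lambda_def by (rule L2_sum) (auto intro: Shadj_L2)

text \<open>The argument of the projection in \<open>bregman_B\<close> is the updated multiplier \<open>lam h k\<close>, so
  the exact solve \<open>bregman_B \<dots> \<le> 0\<close> says \<open>u\<^sub>k = P(\<lambda>\<^sub>k)\<close>.\<close>

lemma iterate_eq_clamp:
  assumes h: "0 < h" "h \<le> hmax" and k: "k \<ge> 1"
  shows "AE x in \<mu>. u h k x = box_clamp (lam h k) x"
proof -
  have "(\<lambda>y. 1 / \<alpha> k * Shadj h (z - Sh h (u h k)) y + lam h (k - 1) y) = lam h k"
    using k by (cases k) (auto simp: bregman_lambda_def add.commute)
  then have "(1 + 1 / \<alpha> k) * L2norm \<Omega> (\<lambda>x. u h k x - L2proj \<Omega> U (lam h k) x) \<le> 0"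
    using u_step[OF h k] by (simp add: bregman_B_def)
  moreover have "1 + 1 / \<alpha> k > 0" using \<alpha>_pos[OF k] by (simp add: add_pos_pos)
  ultimately have "L2norm \<Omega> (\<lambda>x. u h k x - L2proj \<Omega> U (lam h k) x) \<le> 0"
    by (simp add: mult_le_0_iff)
  moreover have lam: "lam h k \<in> L2 \<Omega>" using h by (intro lam_L2) simp
  ultimately have "AE x in \<mu>. u h k x - L2proj \<Omega> U (lam h k) x = 0"
    using iterate_in_Uad[OF h k] L2proj_Uad(1)[OF lam]
    by (intro L2norm_le_0_AE_eq_0 L2_diff Uad_L2)
  with L2proj_Uad(2)[OF lam] show ?thesis by eventually_elim simp
qed

definition small_pdag_set :: "'a set \<Rightarrow> real \<Rightarrow> 'a set" where
  "small_pdag_set I \<epsilon> = {x \<in> \<Omega> - I. 0 < \<bar>pdag x\<bar> \<and> \<bar>pdag x\<bar> < \<epsilon>}"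

lemma small_pdag_set_sets: "I \<in> sets lebesgue \<Longrightarrow> small_pdag_set I \<epsilon> \<in> sets \<mu>"
proof -
  assume I: "I \<in> sets lebesgue"
  have [measurable]: "pdag \<in> borel_measurable \<mu>" using pdag_L2 by (simp add: L2_def)
  have "{x \<in> space \<mu>. 0 < \<bar>pdag x\<bar> \<and> \<bar>pdag x\<bar> < \<epsilon>} \<in> sets \<mu>" by measurable
  moreover have "\<Omega> \<inter> I \<in> sets \<mu>" using I \<Omega>_meas by (simp add: sets_restrict_space_iff)
  ultimately have "{x \<in> space \<mu>. 0 < \<bar>pdag x\<bar> \<and> \<bar>pdag x\<bar> < \<epsilon>} - (\<Omega> \<inter> I) \<in> sets \<mu>" by blast
  moreover have "small_pdag_set I \<epsilon> = {x \<in> space \<mu>. 0 < \<bar>pdag x\<bar> \<and> \<bar>pdag x\<bar> < \<epsilon>} - (\<Omega> \<inter> I)"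
    by (auto simp: small_pdag_set_def)
  ultimately show ?thesis by simp
qed

lemma iterate_error_pointwise:
  assumes h: "0 < h" "h \<le> hmax" and k: "k \<ge> 1" and \<epsilon>: "\<epsilon> > 0"
    and pdag_nonzero: "\<And>x. x \<in> \<Omega> \<Longrightarrow> x \<notin> I \<Longrightarrow> pdag x \<noteq> 0"
    and source: "AE x in \<mu>. x \<in> I \<longrightarrow> udag x = box_clamp (Sadj w) x"
    and R: "AE x in \<mu>. \<bar>Sadj w x - udag x\<bar> \<le> R"
  shows "AE x in \<mu>. (u h k x - udag x)\<^sup>2
    \<le> lam h k x * (u h k x - udag x) - Sadj w x * (u h k x - udag x)
      + (R * (2 * box_bound)) * indicator (small_pdag_set I \<epsilon>) x
      - (R / \<epsilon>) * (pdag x * (u h k x - udag x))"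
  using iterate_eq_clamp[OF h k] Uad_bounds[OF udag_mem] Uad_bounds[OF iterate_in_Uad[OF h k]]
    pdag_sign[OF iterate_in_Uad[OF h k]] ua_ub source R AE_space
proof eventually_elim
  case (elim x)
  have err: "\<bar>u h k x - udag x\<bar> \<le> 2 * box_bound" using elim(2,3) by linarith
  have clamp: "u h k x = max (ua x) (min (ub x) (lam h k x))" using elim(1) by (simp add: box_clamp_def)
  have src: "x \<in> I \<Longrightarrow> udag x = max (ua x) (min (ub x) (Sadj w x))"
    using elim(6) by (simp add: box_clamp_def)
  have nz: "x \<notin> I \<Longrightarrow> pdag x \<noteq> 0" using pdag_nonzero elim(8) by simp
  have ind: "indicator (small_pdag_set I \<epsilon>) x
      = (if \<not> x \<in> I \<and> 0 < \<bar>pdag x\<bar> \<and> \<bar>pdag x\<bar> < \<epsilon> then 1 else (0::real))"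
    using elim(8) by (simp add: small_pdag_set_def indicator_def)
  have "ua x \<le> udag x" "udag x \<le> ub x" "ua x \<le> u h k x" "u h k x \<le> ub x" using elim(2,3) by auto
  from clamp_error_pointwise[OF elim(5) this clamp err elim(4) src nz elim(7) \<epsilon> ind]
  show ?case .
qed

lemma small_pdag_set_integral:
  assumes "I \<in> sets lebesgue"
  shows "integrable \<mu> (indicator (small_pdag_set I \<epsilon>) :: 'a \<Rightarrow> real)"
    and "integral\<^sup>L \<mu> (indicator (small_pdag_set I \<epsilon>)) = measure lebesgue (small_pdag_set I \<epsilon>)"
proof -
  have N: "small_pdag_set I \<epsilon> \<in> sets \<mu>" "small_pdag_set I \<epsilon> \<subseteq> \<Omega>"
    using small_pdag_set_sets[OF assms] by (auto simp: small_pdag_set_def)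
  then show "integrable \<mu> (indicator (small_pdag_set I \<epsilon>) :: 'a \<Rightarrow> real)"
    using finite_measure.emeasure_finite[OF finite_measure_lebesgue_on[OF \<Omega>_lmeasurable]]
    by (simp add: less_top)
  show "integral\<^sup>L \<mu> (indicator (small_pdag_set I \<epsilon>)) = measure lebesgue (small_pdag_set I \<epsilon>)"
    using N \<Omega>_meas by (simp add: Int_absorb2 measure_restrict_space)
qed

lemma L2inner_lam:
  assumes "h \<ge> 0" and v: "v \<in> L2 \<Omega>"
  shows "L2inner \<Omega> (lam h k) v = (\<Sum>i=1..k. 1 / \<alpha> i * inner (Sh h v) (z - Sh h (u h i)))"
proof -
  have "L2inner \<Omega> (lam h k) v = (\<Sum>i=1..k. 1 / \<alpha> i * L2inner \<Omega> (Shadj h (z - Sh h (u h i))) v)"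
    unfolding bregman_lambda_def using assms by (intro L2inner_sum_left) (auto intro: Shadj_L2)
  then show ?thesis using assms by (simp add: L2inner_commute[of \<Omega> _ v] Sh_adjoint)
qed

lemma iterate_error_bound:
  assumes h: "0 < h" "h \<le> hmax" and k: "k \<ge> 1" and \<epsilon>: "\<epsilon> > 0" and I: "I \<in> sets lebesgue"
    and pdag_nonzero: "\<And>x. x \<in> \<Omega> \<Longrightarrow> x \<notin> I \<Longrightarrow> pdag x \<noteq> 0"
    and source: "AE x in \<mu>. x \<in> I \<longrightarrow> udag x = box_clamp (Sadj w) x"
    and R: "AE x in \<mu>. \<bar>Sadj w x - udag x\<bar> \<le> R" and R_nonneg: "R \<ge> 0"
    and small: "measure lebesgue (small_pdag_set I \<epsilon>) \<le> m"
  shows "(L2norm \<Omega> (\<lambda>x. u h k x - udag x))\<^sup>2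
     \<le> (\<Sum>i=1..k. 1 / \<alpha> i * inner (Sh h (u h k) - Sh h udag) (z - Sh h (u h i)))
       - inner (S (u h k) - S udag) w + R * (2 * box_bound) * m
       - R / \<epsilon> * inner (S (u h k) - S udag) (z - S udag)"
proof -
  define e where "e x = u h k x - udag x" for x
  define N where "N = small_pdag_set I \<epsilon>"
  have uk: "u h k \<in> L2 \<Omega>" using iterate_in_Uad[OF h k] by (rule Uad_L2)
  have e: "e \<in> L2 \<Omega>" unfolding e_def[abs_def] using uk udag_L2 by (rule L2_diff)
  have lam: "lam h k \<in> L2 \<Omega>" using h by (intro lam_L2) simp
  have N_int: "integrable \<mu> (indicator N :: 'a \<Rightarrow> real)"
    unfolding N_def by (rule small_pdag_set_integral(1)[OF I])
  have N_measure: "R * (2 * box_bound) * integral\<^sup>L \<mu> (indicator N) \<le> R * (2 * box_bound) * m"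
    using small R_nonneg box_bound unfolding N_def small_pdag_set_integral(2)[OF I]
    by (intro mult_left_mono) auto
  have S_e: "S e = S (u h k) - S udag" and Sh_e: "Sh h e = Sh h (u h k) - Sh h udag"
    unfolding e_def[abs_def] using h uk udag_L2 by (auto intro: S_diff Sh_diff)
  have int_lam: "integral\<^sup>L \<mu> (\<lambda>x. lam h k x * e x)
      = (\<Sum>i=1..k. 1 / \<alpha> i * inner (Sh h (u h k) - Sh h udag) (z - Sh h (u h i)))"
    using L2inner_lam[OF _ e, of h k] h by (simp add: L2inner_def Sh_e)
  have int_w: "integral\<^sup>L \<mu> (\<lambda>x. Sadj w x * e x) = inner (S (u h k) - S udag) w"
    and int_p: "integral\<^sup>L \<mu> (\<lambda>x. pdag x * e x) = inner (S (u h k) - S udag) (z - S udag)"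
    using S_adjoint[OF e] S_e by (simp_all add: L2inner_def pdag_def mult.commute)
  have int_lam_e: "integrable \<mu> (\<lambda>x. lam h k x * e x)"
    and int_w_e: "integrable \<mu> (\<lambda>x. Sadj w x * e x)"
    and int_p_e: "integrable \<mu> (\<lambda>x. pdag x * e x)"
    using lam Sadj_L2 pdag_L2 e by (auto intro: L2_mult_integrable)
  have "(L2norm \<Omega> (\<lambda>x. u h k x - udag x))\<^sup>2 = integral\<^sup>L \<mu> (\<lambda>x. (e x)\<^sup>2)"
    unfolding L2norm_sq by (simp add: L2inner_def e_def power2_eq_square)
  also have "\<dots> \<le> integral\<^sup>L \<mu> (\<lambda>x. lam h k x * e x - Sadj w x * e x
      + (R * (2 * box_bound)) * indicator N x - (R / \<epsilon>) * (pdag x * e x))"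
    using iterate_error_pointwise[OF h k \<epsilon> pdag_nonzero source R]
    unfolding e_def[symmetric] N_def[symmetric]
    by (intro integral_mono_AE Bochner_Integration.integrable_add Bochner_Integration.integrable_diff
        integrable_mult_right N_int int_lam_e int_w_e int_p_e) (use e in \<open>simp add: L2_def\<close>)
  also have "\<dots> = integral\<^sup>L \<mu> (\<lambda>x. lam h k x * e x) - integral\<^sup>L \<mu> (\<lambda>x. Sadj w x * e x)
      + R * (2 * box_bound) * integral\<^sup>L \<mu> (indicator N) - R / \<epsilon> * integral\<^sup>L \<mu> (\<lambda>x. pdag x * e x)"
    using int_lam_e int_w_e int_p_e N_int by simp
  finally show ?thesis using N_measure unfolding int_lam int_w int_p by linarith
qed

lemma S_error_pairing_bounds:
  assumes v: "v \<in> U" and Smax: "\<And>v. v \<in> U \<Longrightarrow> norm (S v) \<le> Smax"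
  shows "0 \<le> - inner (S v - S udag) (z - S udag)"
    and "- inner (S v - S udag) (z - S udag) \<le> 2 * Smax * norm (z - S udag)"
proof -
  have e: "(\<lambda>x. v x - udag x) \<in> L2 \<Omega>" using Uad_L2[OF v] udag_L2 by (rule L2_diff)
  have "0 \<le> integral\<^sup>L \<mu> (\<lambda>x. - (pdag x * (v x - udag x)))"
    using pdag_sign[OF v] by (intro integral_nonneg_AE) (auto elim: AE_mp)
  also have "\<dots> = - inner (S v - S udag) (z - S udag)"
    using S_adjoint[OF e] by (simp add: S_diff[OF Uad_L2[OF v] udag_L2] L2inner_def pdag_def mult.commute)
  finally show "0 \<le> - inner (S v - S udag) (z - S udag)" .
  have "norm (S v - S udag) \<le> 2 * Smax"
    using norm_triangle_ineq4[of "S v" "S udag"] Smax[OF v] Smax[OF udag_mem] by linarith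
  then have "norm (S v - S udag) * norm (z - S udag) \<le> 2 * Smax * norm (z - S udag)"
    by (rule mult_right_mono) simp
  then show "- inner (S v - S udag) (z - S udag) \<le> 2 * Smax * norm (z - S udag)"
    using Cauchy_Schwarz_ineq2[of "S v - S udag" "z - S udag"] by linarith
qed

lemma weighted_iterate_error_sum_bound:
  assumes h: "0 < h" "h \<le> hmax" and \<epsilon>: "\<epsilon> > 0" and I: "I \<in> sets lebesgue"
    and pdag_nonzero: "\<And>x. x \<in> \<Omega> \<Longrightarrow> x \<notin> I \<Longrightarrow> pdag x \<noteq> 0"
    and source: "AE x in \<mu>. x \<in> I \<longrightarrow> udag x = box_clamp (Sadj w) x"
    and R: "AE x in \<mu>. \<bar>Sadj w x - udag x\<bar> \<le> R" and R_nonneg: "R \<ge> 0"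
    and small: "measure lebesgue (small_pdag_set I \<epsilon>) \<le> m"
    and Smax: "\<And>v. v \<in> U \<Longrightarrow> norm (S v) \<le> Smax" "Smax \<ge> 0"
  shows "(\<Sum>k=1..K. 1 / \<alpha> k * (L2norm \<Omega> (\<lambda>x. u h k x - udag x))\<^sup>2)
      \<le> (gam \<alpha> K)\<^sup>2 * (\<delta> h * (2 * norm (z - S udag) + 2 * \<delta> h + 2 * Smax))
        + 2 * Smax * norm (z - S udag) * (R / \<epsilon>)\<^sup>2 / 2 + (norm w)\<^sup>2 / 2
        + gam \<alpha> K * (2 * \<delta> h * norm w + R * (2 * box_bound) * m)"
proof (rule weighted_error_sum_bound[of \<alpha>, OF \<alpha>_pos])
  have uk: "u h k \<in> U" if "k \<in> {1..K}" for k using iterate_in_Uad[OF h] that by simp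
  fix k assume k: "k \<in> {1..K}"
  show "norm (Sh h (u h k) - S (u h k)) \<le> \<delta> h" using h uk[OF k] by (intro discretization_error) auto
  show "norm (S (u h k) - S udag) \<le> 2 * Smax"
    using norm_triangle_ineq4[of "S (u h k)" "S udag"] Smax(1)[OF uk[OF k]] Smax(1)[OF udag_mem]
    by linarith
  show "0 \<le> - inner (S (u h k) - S udag) (z - S udag) \<and>
      - inner (S (u h k) - S udag) (z - S udag) \<le> 2 * Smax * norm (z - S udag)"
    using S_error_pairing_bounds[OF uk[OF k] Smax(1)] by simp
  show "(L2norm \<Omega> (\<lambda>x. u h k x - udag x))\<^sup>2
      \<le> (\<Sum>i=1..k. 1 / \<alpha> i * inner (Sh h (u h k) - Sh h udag) (z - Sh h (u h i)))
        - inner (S (u h k) - S udag) w + R * (2 * box_bound) * m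
        - R / \<epsilon> * inner (S (u h k) - S udag) (z - S udag)"
    using k by (intro iterate_error_bound[OF h _ \<epsilon> I pdag_nonzero source R R_nonneg small]) auto
qed (use h udag_mem Smax R_nonneg \<epsilon> in \<open>auto intro: discretization_error\<close>)

lemma min_error_bound:
  assumes h: "0 < h" "h \<le> hmax" and K: "K \<ge> 1" and \<epsilon>: "\<epsilon> > 0" and I: "I \<in> sets lebesgue"
    and pdag_nonzero: "\<And>x. x \<in> \<Omega> \<Longrightarrow> x \<notin> I \<Longrightarrow> pdag x \<noteq> 0"
    and source: "AE x in \<mu>. x \<in> I \<longrightarrow> udag x = box_clamp (Sadj w) x"
    and R: "AE x in \<mu>. \<bar>Sadj w x - udag x\<bar> \<le> R" and R_nonneg: "R \<ge> 0"
    and small: "measure lebesgue (small_pdag_set I \<epsilon>) \<le> m"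
    and Smax: "\<And>v. v \<in> U \<Longrightarrow> norm (S v) \<le> Smax" "Smax \<ge> 0"
    and M\<alpha>: "\<And>k. k \<ge> 1 \<Longrightarrow> \<alpha> k \<le> M\<alpha>"
  shows "\<exists>i\<in>{1..K}. (L2norm \<Omega> (\<lambda>x. u h i x - udag x))\<^sup>2
     \<le> (2 * norm (z - S udag) + 2 * \<delta> hmax + 2 * Smax) * \<delta> h * gam \<alpha> K
       + (Smax * norm (z - S udag) * R\<^sup>2 / \<epsilon>\<^sup>2 + (norm w)\<^sup>2 / 2) / gam \<alpha> K
       + 2 * norm w * \<delta> h + R * (2 * box_bound) * m"
proof -
  define E where "E k = (L2norm \<Omega> (\<lambda>x. u h k x - udag x))\<^sup>2" for k
  define g where "g = gam \<alpha> K"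
  define D where "D = \<delta> h * (2 * norm (z - S udag) + 2 * \<delta> h + 2 * Smax)"
  define W where "W = 2 * Smax * norm (z - S udag) * (R / \<epsilon>)\<^sup>2 / 2 + (norm w)\<^sup>2 / 2"
  define T where "T = 2 * \<delta> h * norm w + R * (2 * box_bound) * m"
  have "(\<Sum>k=1..K. 1 / \<alpha> k * E k)
      \<le> g\<^sup>2 * D + 2 * Smax * norm (z - S udag) * (R / \<epsilon>)\<^sup>2 / 2 + (norm w)\<^sup>2 / 2 + g * T"
    unfolding E_def g_def D_def T_def
    by (rule weighted_iterate_error_sum_bound[OF h \<epsilon> I pdag_nonzero source R R_nonneg small Smax])
  moreover obtain i where i: "i \<in> {1..K}" "g * E i \<le> (\<Sum>k=1..K. 1 / \<alpha> k * E k)"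
    using exists_below_weighted_mean[of \<alpha> K E, OF \<alpha>_pos K] unfolding g_def by blast
  ultimately have "g * E i \<le> g * (g * D + T) + W"
    by (simp add: W_def power2_eq_square algebra_simps)
  moreover have "0 < real K / M\<alpha>" using K \<alpha>_pos[of 1] M\<alpha>[of 1] by simp
  then have g: "g > 0" using gam_ge_div_bound[of \<alpha> M\<alpha> K, OF \<alpha>_pos M\<alpha>] unfolding g_def by linarith
  ultimately have "E i \<le> (g * (g * D + T) + W) / g" by (simp add: pos_le_divide_eq mult.commute)
  also have "\<dots> = g * D + W / g + T" using g by (simp add: field_simps)
  finally have Ei: "E i \<le> g * D + W / g + T" .
  have "D \<le> (2 * norm (z - S udag) + 2 * \<delta> hmax + 2 * Smax) * \<delta> h"
    using h \<delta>_nonneg[of h] mono_onD[OF \<delta>_mono, of h hmax]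
    unfolding D_def by (simp add: mult.commute mult_left_mono)
  then have "g * D \<le> (2 * norm (z - S udag) + 2 * \<delta> hmax + 2 * Smax) * \<delta> h * g"
    using g by (simp add: mult.commute mult_left_mono)
  moreover have "W = Smax * norm (z - S udag) * R\<^sup>2 / \<epsilon>\<^sup>2 + (norm w)\<^sup>2 / 2"
    by (simp add: W_def power_divide)
  ultimately show ?thesis
    using i(1) Ei unfolding E_def T_def g_def by (intro bexI[of _ i]) (auto simp: algebra_simps)
qed

lemma exists_min_error_bound:
  assumes "hmax \<ge> 0"
  shows "\<exists>c1 c2 c3 P Q \<kappa>. c1 \<ge> 0 \<and> c2 \<ge> 0 \<and> c3 \<ge> 0 \<and> P \<ge> 0 \<and> Q \<ge> 0 \<and> \<kappa> > 0 \<and>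
    (\<forall>\<epsilon> h K. \<epsilon> > 0 \<longrightarrow> 0 < h \<longrightarrow> h \<le> hmax \<longrightarrow> K \<ge> 1 \<longrightarrow>
      (\<exists>i\<in>{1..K}. (L2norm \<Omega> (\<lambda>x. u h i x - udag x))\<^sup>2
        \<le> c1 * \<delta> h * gam \<alpha> K + (P / \<epsilon>\<^sup>2 + Q) / gam \<alpha> K + c2 * \<delta> h + c3 * \<epsilon> powr \<kappa>))"
proof -
  obtain I w \<kappa> c where I: "I \<in> sets lebesgue" and \<kappa>: "\<kappa> > 0" and c: "c > 0"
    and pdag_zero: "{x \<in> \<Omega>. pdag x = 0} \<subseteq> I"
    and source: "AE x in \<mu>. x \<in> I \<longrightarrow> udag x = L2proj \<Omega> U (Sadj w) x"
    and small: "\<And>\<epsilon>. \<epsilon> > 0 \<Longrightarrow> measure lebesgue (small_pdag_set I \<epsilon>) \<le> c * \<epsilon> powr \<kappa>"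
    and Sadj_w: "Linfty \<Omega> (Sadj w)"
    using asc unfolding active_set_condition_def Let_def pdag_def[symmetric] small_pdag_set_def by blast
  have source': "AE x in \<mu>. x \<in> I \<longrightarrow> udag x = box_clamp (Sadj w) x"
    using source L2proj_Uad(2)[OF Sadj_L2[of w]] by eventually_elim auto
  obtain Bw where Bw: "AE x in \<mu>. \<bar>Sadj w x\<bar> \<le> Bw" using Sadj_w by (auto simp: Linfty_def)
  define R where "R = \<bar>Bw\<bar> + box_bound"
  have R: "AE x in \<mu>. \<bar>Sadj w x - udag x\<bar> \<le> R"
    using Bw Uad_bounds[OF udag_mem] by eventually_elim (auto simp: R_def)
  have R_nonneg: "R \<ge> 0" using box_bound by (simp add: R_def)
  obtain Smax where Smax: "Smax \<ge> 0" "\<And>v. v \<in> U \<Longrightarrow> norm (S v) \<le> Smax"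
    using S_bounded_on_Uad by blast
  obtain M\<alpha> where M\<alpha>: "\<And>k. k \<ge> 1 \<Longrightarrow> \<alpha> k \<le> M\<alpha>" using \<alpha>_bdd by blast
  show ?thesis
  proof (intro exI conjI allI impI)
    fix \<epsilon> h :: real and K :: nat assume "\<epsilon> > 0" "0 < h" "h \<le> hmax" "K \<ge> 1"
    from min_error_bound[OF \<open>0 < h\<close> \<open>h \<le> hmax\<close> \<open>K \<ge> 1\<close> \<open>\<epsilon> > 0\<close> I _ source' R R_nonneg
        small[OF \<open>\<epsilon> > 0\<close>] Smax(2,1) M\<alpha>] pdag_zero
    show "\<exists>i\<in>{1..K}. (L2norm \<Omega> (\<lambda>x. u h i x - udag x))\<^sup>2
      \<le> (2 * norm (z - S udag) + 2 * \<delta> hmax + 2 * Smax) * \<delta> h * gam \<alpha> K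
        + (Smax * norm (z - S udag) * R\<^sup>2 / \<epsilon>\<^sup>2 + (norm w)\<^sup>2 / 2) / gam \<alpha> K
        + 2 * norm w * \<delta> h + R * (2 * box_bound) * c * \<epsilon> powr \<kappa>"
      by (auto simp: mult.assoc)
  qed (use assms \<delta>_nonneg Smax R_nonneg box_bound c \<kappa> in auto)
qed

end

theorem corollary4p7:
  fixes \<Omega> :: "'a::euclidean_space set"
    and S :: "('a \<Rightarrow> real) \<Rightarrow> 'y::{real_inner, complete_space}"
    and Sadj :: "'y \<Rightarrow> 'a \<Rightarrow> real"
    and Sh :: "real \<Rightarrow> ('a \<Rightarrow> real) \<Rightarrow> 'y"
    and Shadj :: "real \<Rightarrow> 'y \<Rightarrow> 'a \<Rightarrow> real"
    and z :: 'y
    and ua ub udag :: "'a \<Rightarrow> real"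
    and \<delta> :: "real \<Rightarrow> real"
    and \<alpha> :: "nat \<Rightarrow> real"
    and hmax :: real
    and u :: "real \<Rightarrow> nat \<Rightarrow> 'a \<Rightarrow> real"
  assumes \<Omega>_bounded: "bounded \<Omega>" and \<Omega>_meas: "\<Omega> \<in> sets lebesgue"
    and S_lin: "bounded_linear_L2 \<Omega> S" and S_adj: "is_adjoint \<Omega> S Sadj"
    and ua: "Linfty \<Omega> ua" and ub: "Linfty \<Omega> ub"
    and ua_ub: "AE x in lebesgue_on \<Omega>. ua x \<le> ub x"
    and Sh_lin: "\<And>h. h \<ge> 0 \<Longrightarrow> bounded_linear_L2 \<Omega> (Sh h)"
    and Sh_adj: "\<And>h. h \<ge> 0 \<Longrightarrow> is_adjoint \<Omega> (Sh h) (Shadj h)"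
    and Sh_fin: "\<And>h. h > 0 \<Longrightarrow> finite_dim_range \<Omega> (Sh h)"
    and \<delta>_cont: "continuous_on {0..} \<delta>" and \<delta>_mono: "mono_on {0..} \<delta>"
    and \<delta>_0: "\<delta> 0 = 0" and \<delta>_nonneg: "\<And>h. h \<ge> 0 \<Longrightarrow> \<delta> h \<ge> 0"
    and \<delta>_bound: "\<And>h v. h \<ge> 0 \<Longrightarrow> v \<in> Uad \<Omega> ua ub \<Longrightarrow>
         norm (S v - Sh h v)
         + L2norm \<Omega> (\<lambda>x. Sadj (Sh h v - z) x - Shadj h (Sh h v - z) x) \<le> \<delta> h"
    and \<alpha>_pos: "\<And>k. k \<ge> 1 \<Longrightarrow> \<alpha> k > 0"
    and \<alpha>_bdd: "\<exists>M. \<forall>k\<ge>1. \<alpha> k \<le> M"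
    and udag_mem: "udag \<in> Uad \<Omega> ua ub"
    and udag_min: "\<And>v. v \<in> Uad \<Omega> ua ub \<Longrightarrow> (norm (S udag - z))\<^sup>2 / 2 \<le> (norm (S v - z))\<^sup>2 / 2"
    and asc: "active_set_condition \<Omega> ua ub Sadj S z udag"
    and hmax_pos: "hmax > 0"
    and u_init: "\<And>h. 0 < h \<Longrightarrow> h \<le> hmax \<Longrightarrow> u h 0 = L2proj \<Omega> (Uad \<Omega> ua ub) (\<lambda>x. 0)"
    and u_step: "\<And>h k. 0 < h \<Longrightarrow> h \<le> hmax \<Longrightarrow> k \<ge> 1 \<Longrightarrow>
         u h k \<in> Uad \<Omega> ua ub \<and>
         bregman_B \<Omega> ua ub (Sh h) (Shadj h) z (\<alpha> k)
           (bregman_lambda (Sh h) (Shadj h) z \<alpha> (u h) (k - 1)) (u h k) \<le> 0"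
  shows "\<exists>C::real. \<exists>kh :: real \<Rightarrow> nat.
           (\<forall>h. 0 < h \<and> h \<le> hmax \<longrightarrow> (\<Sum>i=1..kh h. Hterm \<delta> h \<alpha> i) \<le> C) \<and>
           filterlim kh at_top (at_right 0) \<and>
           ((\<lambda>h. Min ((\<lambda>i. L2norm \<Omega> (\<lambda>x. u h i x - udag x)) ` {1..kh h})) \<longlongrightarrow> 0) (at_right 0)"
proof -
  interpret exact_bregman_iteration \<Omega> ua ub S Sadj z udag Sh Shadj \<delta> \<alpha> hmax u
    by unfold_locales (fact assms)+
  obtain M where M: "\<And>k. k \<ge> 1 \<Longrightarrow> \<alpha> k \<le> M" using \<alpha>_bdd by blast
  have "(\<delta> \<longlongrightarrow> \<delta> 0) (at 0 within {0<..})"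
    using \<delta>_cont by (auto simp: continuous_on_def intro: tendsto_within_subset)
  then have \<delta>_lim: "(\<delta> \<longlongrightarrow> 0) (at_right 0)" using \<delta>_0 by simp
  have "\<delta> h \<le> \<delta> hmax" if "0 < h" "h \<le> hmax" for h
    using that by (intro mono_onD[OF \<delta>_mono]) auto
  then show ?thesis
    using stopping_rule_convergence[OF \<alpha>_pos M \<delta>_nonneg \<delta>_lim _ hmax_pos L2norm_nonneg
        exists_min_error_bound] hmax_pos by simp
qed

end
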